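(* Let $r>0$ and let $L$ range over those integers for which $N=rL$ is an integer. Let $\nu_L$ be the (unique) stationary distribution of the RBB process with $L$ bins and $N=rL$ balls, and let $\eta^L\sim\nu_L$. Assume that $(\nu_L)$ is chaotic, i.e. there is a probability measure $\mu$ on $\mathbb{Z}_+$ such that for every $n\in\mathbb{N}$ the law of $(\eta^L_1,\dots,\eta^L_n)$ converges weakly to $\mu^{\otimes n}$ as $L\to\infty$. Then $\mu=\pi_{\rho_r}$, where $\rho_r=1+r-\sqrt{1+r^2}$.
   Context: RBB process with $L$ bins: Markov chain on $\mathbb{Z}_+^L$; with $w(\eta):=(\mathbf{1}(\eta_1>0),\dots,\mathbf{1}(\eta_L>0))$ and $K(\eta):=\sum_j\mathbf{1}(\eta_j>0)$, from state $\eta$ the next state is $\eta-w(\eta)+B(\eta)$ where $B(\eta)$ is multinomial with $K(\eta)$ trials and cell probabilities $(1/L,\dots,1/L)$. It conserves the total number of balls and, restricted to configurations with $N$ balls, is an ergodic finite Markov chain. The M/D/1 queue with arrival rate $\rho\ge0$ is the Markov chain on $\mathbb{Z}_+$ given by $\zeta(t+1):=\zeta(t)-\mathbf{1}(\zeta(t)>0)+M_{t+1}$ with $(M_t)_{t\ge1}$ i.i.d. Poisson of mean $\rho$; for $\rho\in[0,1)$, $\pi_\rho$ denotes its invariant probability measure. *)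

theory Defs
  imports "HOL-Probability.Probability"
begin

text \<open>Configurations of the RBB process with L bins are lists of naturals of length L
  (bin j of the paper is list index j-1).\<close>

definition occupied :: "nat list \<Rightarrow> nat list" where
  "occupied \<eta> = map (\<lambda>x. if 0 < x then 1 else 0) \<eta>"

definition num_occupied :: "nat list \<Rightarrow> nat" where
  "num_occupied \<eta> = length (filter (\<lambda>x. 0 < x) \<eta>)"

definition multinomial_uniform :: "nat \<Rightarrow> nat \<Rightarrow> nat list pmf" where
  "multinomial_uniform L k =
     map_pmf (\<lambda>bs. map (\<lambda>j. count_list bs j) [0..<L]) (replicate_pmf k (pmf_of_set {..<L}))"

definition rbb_step :: "nat \<Rightarrow> nat list \<Rightarrow> nat list pmf" where
  "rbb_step L \<eta> =
     map_pmf (\<lambda>b. map (\<lambda>(x, w, y). x - w + y) (zip \<eta> (zip (occupied \<eta>) b)))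
             (multinomial_uniform L (num_occupied \<eta>))"

definition rbb_configs :: "nat \<Rightarrow> nat \<Rightarrow> nat list set" where
  "rbb_configs L N = {\<eta>. length \<eta> = L \<and> sum_list \<eta> = N}"

definition rbb_stationary :: "nat \<Rightarrow> nat \<Rightarrow> nat list pmf \<Rightarrow> bool" where
  "rbb_stationary L N p \<longleftrightarrow> set_pmf p \<subseteq> rbb_configs L N \<and> bind_pmf p (rbb_step L) = p"

definition poisson_arrivals :: "real \<Rightarrow> nat pmf" where
  "poisson_arrivals \<rho> = (if \<rho> = 0 then return_pmf 0 else poisson_pmf \<rho>)"

definition md1_step :: "real \<Rightarrow> nat \<Rightarrow> nat pmf" where
  "md1_step \<rho> z = map_pmf (\<lambda>m. z - (if 0 < z then 1 else 0) + m) (poisson_arrivals \<rho>)"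

definition md1_invariant :: "real \<Rightarrow> nat pmf \<Rightarrow> bool" where
  "md1_invariant \<rho> p \<longleftrightarrow> bind_pmf p (md1_step \<rho>) = p"

text \<open>\<pi>_\<rho>: the invariant probability measure of the M/D/1 queue (\<rho> \<in> [0,1)).\<close>
definition md1_pi :: "real \<Rightarrow> nat pmf" where
  "md1_pi \<rho> = (THE p. md1_invariant \<rho> p)"

end

theory Submission
  imports Defs "HOL-Combinatorics.Permutations"
begin

text \<open>
  The stationary law \<open>\<nu>\<^sub>L\<close> is exchangeable, because it is unique and the dynamics commute with
  permutations of the bins. Let \<open>p\<close> and \<open>q\<close> be the probabilities that the first bin, respectively the
  first two bins, are occupied, and \<open>K\<close> the number of occupied bins. Stationarity of
  \<open>E \<Sum>\<^sub>i \<eta>\<^sub>i\<^sup>2\<close> gives \<open>2N = 2Lp + 2Np - 2p - (L - 1)q\<close>; with \<open>N = rL\<close> and chaos (\<open>p \<rightarrow> \<rho> = 1 - \<mu>{0}\<close>,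
  \<open>q \<rightarrow> \<rho>\<^sup>2\<close>) this yields \<open>\<rho>\<^sup>2 - 2(1 + r)\<rho> + 2r = 0\<close>, and also \<open>Var (K/L) \<rightarrow> 0\<close>.
  Stationarity of \<open>E z ^ \<eta>\<^sub>1\<close> gives \<open>E z ^ \<eta>\<^sub>1 = E [z ^ (\<eta>\<^sub>1 - 1) ((L - 1 + z) / L) ^ K]\<close>, and by the
  concentration of \<open>K/L\<close> the right side tends to \<open>E\<^sub>\<mu> [z ^ (n - 1)] exp (\<rho> (z - 1))\<close>, the generating
  function of one M/D/1 step started from \<open>\<mu>\<close>. So \<open>\<mu>\<close> is invariant for the M/D/1 queue with
  arrival rate \<open>\<rho> < 1\<close>, whose invariant law is unique.
\<close>

section \<open>Generating functions of distributions on the naturals\<close>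

definition pgf :: "nat pmf \<Rightarrow> real \<Rightarrow> real" where
  "pgf p z = measure_pmf.expectation p (\<lambda>n. z ^ n)"

lemma expectation_bind_pmf:
  fixes f :: "'b \<Rightarrow> real"
  assumes "\<And>y. \<bar>f y\<bar> \<le> B"
  shows "measure_pmf.expectation (bind_pmf p K) f =
         measure_pmf.expectation p (\<lambda>x. measure_pmf.expectation (K x) f)"
  unfolding measure_pmf_bind
  by (rule integral_bind[where K="count_space UNIV" and B=B and B'=1])
     (auto simp: assms measure_pmf.subprob_space_axioms measure_pmf.emeasure_space_1
           intro!: measure_pmf_in_subprob_algebra finite_measure.intro)

lemma integrable_pmf_bounded:
  fixes f :: "'a \<Rightarrow> real"
  assumes "\<And>x. \<bar>f x\<bar> \<le> B"
  shows "integrable (measure_pmf p) f"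
  by (rule measure_pmf.integrable_const_bound[where B=B]) (use assms in auto)

lemma sums_pmf_expectation:
  fixes p :: "nat pmf" and f :: "nat \<Rightarrow> real"
  assumes "\<And>n. \<bar>f n\<bar> \<le> B"
  shows "(\<lambda>n. pmf p n * f n) sums measure_pmf.expectation p f"
proof -
  have "integrable (count_space UNIV) (\<lambda>n. pmf p n * f n)"
  proof (rule Bochner_Integration.integrable_bound)
    show "integrable (count_space UNIV) (\<lambda>n. pmf p n * B)"
      using integrable_pmf[of UNIV p] by simp
    show "AE n in count_space UNIV. norm (pmf p n * f n) \<le> norm (pmf p n * B)"
      using assms by (auto simp: abs_mult intro!: mult_left_mono order.trans[OF _ abs_ge_self])
  qed auto
  moreover have "measure_pmf.expectation p f = integral\<^sup>L (count_space UNIV) (\<lambda>n. pmf p n * f n)"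
    unfolding measure_pmf_eq_density by (subst integral_density) auto
  ultimately show ?thesis
    using sums_integral_count_space_nat by metis
qed

lemma sums_pmf_one: "(\<lambda>n. pmf p n) sums (1::real)" for p :: "nat pmf"
  using sums_pmf_expectation[of "\<lambda>_. 1::real" 1 p] by simp

lemma pgf_sums:
  assumes "0 \<le> z" "z \<le> 1"
  shows "(\<lambda>n. pmf p n * z ^ n) sums pgf p z"
  unfolding pgf_def
  by (rule sums_pmf_expectation[where B=1]) (use assms in \<open>auto intro: power_le_one\<close>)

lemma summable_powser_bounded:
  fixes c :: "nat \<Rightarrow> real"
  assumes "\<And>n. \<bar>c n\<bar> \<le> B" and "\<bar>x\<bar> < 1"
  shows "summable (\<lambda>n. c n * x ^ n)"
proof (rule summable_comparison_test)
  show "summable (\<lambda>n. B * \<bar>x\<bar> ^ n)"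
    using assms(2) by (intro summable_mult summable_geometric) auto
  show "\<exists>N. \<forall>n\<ge>N. norm (c n * x ^ n) \<le> B * \<bar>x\<bar> ^ n"
    using assms(1) by (auto simp: abs_mult power_abs intro!: mult_right_mono)
qed

lemma powser_coeff_0_eq_0:
  fixes c :: "nat \<Rightarrow> real"
  assumes "\<And>n. \<bar>c n\<bar> \<le> B" and "\<And>x. 0 < x \<Longrightarrow> x < 1 \<Longrightarrow> (\<Sum>n. c n * x ^ n) = 0"
  shows "c 0 = 0"
proof -
  have "((\<lambda>x. \<Sum>n. c n * x ^ n) \<longlongrightarrow> c 0) (at 0)"
    by (rule powser_limit_0[of 1])
       (auto intro: summable_powser_bounded[OF assms(1)])
  hence "((\<lambda>x. \<Sum>n. c n * x ^ n) \<longlongrightarrow> c 0) (at_right 0)"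
    by (rule filterlim_mono) (auto simp: at_within_le_at)
  moreover have "\<forall>\<^sub>F x in at_right 0. (\<Sum>n. c n * x ^ n) = (0::real)"
    by (rule eventually_at_rightI[of 0 1]) (use assms(2) in auto)
  ultimately have "((\<lambda>_. 0) \<longlongrightarrow> c 0) (at_right (0::real))"
    using tendsto_cong by fastforce
  thus ?thesis
    using tendsto_unique[OF trivial_limit_at_right_real] tendsto_const by blast
qed

lemma powser_coeffs_eq_0:
  fixes c :: "nat \<Rightarrow> real"
  assumes "\<And>n. \<bar>c n\<bar> \<le> B" and "\<And>x. 0 < x \<Longrightarrow> x < 1 \<Longrightarrow> (\<Sum>n. c n * x ^ n) = 0"
  shows "c n = 0"
  using assms
proof (induction n arbitrary: c)
  case 0
  then show ?case by (rule powser_coeff_0_eq_0)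
next
  case (Suc n)
  have c0: "c 0 = 0" using Suc.prems by (rule powser_coeff_0_eq_0)
  have "(\<Sum>k. c (Suc k) * x ^ k) = 0" if "0 < x" "x < 1" for x
  proof -
    have "summable (\<lambda>k. c k * x ^ k)"
      using that by (intro summable_powser_bounded[OF Suc.prems(1)]) auto
    from powser_split_head(2)[OF this]
    show ?thesis using Suc.prems(2)[OF that] c0 that by simp
  qed
  then show ?case using Suc.IH[of "\<lambda>k. c (Suc k)"] Suc.prems(1) by blast
qed

lemma pgf_scaled_eq_imp_pmf_scaled_eq:
  fixes p q :: "nat pmf"
  assumes "\<And>z. 0 < z \<Longrightarrow> z < 1 \<Longrightarrow> a * pgf p z = b * pgf q z"
  shows "a * pmf p n = b * pmf q n"
proof -
  have "a * pmf p n - b * pmf q n = 0"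
  proof (rule powser_coeffs_eq_0[where B="\<bar>a\<bar> + \<bar>b\<bar>"])
    fix n
    show "\<bar>a * pmf p n - b * pmf q n\<bar> \<le> \<bar>a\<bar> + \<bar>b\<bar>"
      using pmf_le_1[of p n] pmf_le_1[of q n]
      by (auto simp: abs_mult intro!: order.trans[OF abs_triangle_ineq4] add_mono mult_left_le)
  next
    fix z :: real assume z: "0 < z" "z < 1"
    have "(\<lambda>n. a * (pmf p n * z ^ n) - b * (pmf q n * z ^ n)) sums (a * pgf p z - b * pgf q z)"
      using z by (intro sums_diff sums_mult pgf_sums) auto
    thus "(\<Sum>n. (a * pmf p n - b * pmf q n) * z ^ n) = 0"
      using assms[OF z] by (simp add: sums_iff algebra_simps)
  qed
  thus ?thesis by simp
qed

lemma pmf_eqI_pgf: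
  assumes "\<And>z. 0 < z \<Longrightarrow> z < 1 \<Longrightarrow> pgf p z = pgf q z"
  shows "p = q"
  using pgf_scaled_eq_imp_pmf_scaled_eq[of 1 p 1 q] assms by (auto intro: pmf_eqI)

lemma pgf_poisson_arrivals:
  assumes "0 \<le> \<rho>" "0 \<le> z" "z \<le> 1"
  shows "pgf (poisson_arrivals \<rho>) z = exp (\<rho> * (z - 1))"
proof (cases "\<rho> = 0")
  case True
  then show ?thesis by (simp add: poisson_arrivals_def pgf_def)
next
  case False
  have "(\<lambda>n. pmf (poisson_pmf \<rho>) n * z ^ n) = (\<lambda>n. exp (-\<rho>) * ((\<rho> * z) ^ n /\<^sub>R fact n))"
    using False assms by (auto simp: field_simps)
  moreover have "(\<lambda>n. exp (-\<rho>) * ((\<rho> * z) ^ n /\<^sub>R fact n)) sums (exp (-\<rho>) * exp (\<rho> * z))"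
    by (intro sums_mult exp_converges)
  ultimately have "pgf (poisson_pmf \<rho>) z = exp (-\<rho>) * exp (\<rho> * z)"
    using pgf_sums[OF assms(2,3), of "poisson_pmf \<rho>"] sums_unique2 by metis
  then show ?thesis
    using False by (simp add: poisson_arrivals_def algebra_simps flip: exp_add)
qed

section \<open>The M/D/1 queue\<close>

lemma pgf_bind_md1_step:
  assumes "0 \<le> \<rho>" "0 \<le> z" "z \<le> 1"
  shows "pgf (bind_pmf p (md1_step \<rho>)) z =
         measure_pmf.expectation p (\<lambda>n. z ^ (n - 1)) * exp (\<rho> * (z - 1))"
proof -
  have "md1_step \<rho> n = map_pmf (\<lambda>m. n - 1 + m) (poisson_arrivals \<rho>)" for n
    by (cases n) (simp_all add: md1_step_def)
  hence "pgf (md1_step \<rho> n) z = z ^ (n - 1) * exp (\<rho> * (z - 1))" for n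
    using pgf_poisson_arrivals[OF assms] by (simp add: pgf_def power_add)
  moreover have "\<bar>z ^ n\<bar> \<le> 1" for n
    using assms by (simp add: power_le_one)
  ultimately show ?thesis
    unfolding pgf_def by (subst expectation_bind_pmf[where B=1]) simp_all
qed

lemma pgf_md1_invariant:
  assumes inv: "md1_invariant \<rho> p" and "0 \<le> \<rho>" and z: "0 \<le> z" "z \<le> 1"
  shows "pgf p z * (exp (\<rho> * (z - 1)) - z) = pmf p 0 * (1 - z) * exp (\<rho> * (z - 1))"
proof -
  define H where "H = measure_pmf.expectation p (\<lambda>n. z ^ (n - 1))"
  define E where "E = exp (\<rho> * (z - 1))"
  have "z * z ^ (n - 1) = z ^ n + (z - 1) * indicator {0} n" for n
    by (cases n) auto
  hence "z * H = measure_pmf.expectation p (\<lambda>n. z ^ n + (z - 1) * indicator {0} n)"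
    unfolding H_def by (simp flip: integral_mult_right_zero)
  also have "\<dots> = pgf p z + (z - 1) * pmf p 0"
    using z unfolding pgf_def
    by (subst Bochner_Integration.integral_add)
       (auto simp: measure_pmf_single power_le_one intro!: integrable_pmf_bounded[where B=1])
  finally have "z * H = pgf p z + (z - 1) * pmf p 0" .
  moreover have "pgf p z = H * E"
    using pgf_bind_md1_step[OF assms(2) z, of p] inv by (simp add: md1_invariant_def H_def E_def)
  ultimately have "z * pgf p z = (pgf p z + (z - 1) * pmf p 0) * E"
    by (metis mult.assoc)
  then show ?thesis
    unfolding E_def[symmetric] by (simp add: algebra_simps)
qed

lemma less_exp_md1:
  fixes \<rho> z :: real
  assumes "0 \<le> \<rho>" "\<rho> < 1" "0 < z" "z < 1"
  shows "z < exp (\<rho> * (z - 1))"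
proof -
  have "z < 1 + \<rho> * (z - 1)"
    using mult_strict_left_mono[of \<rho> 1 "1 - z"] assms by (simp add: algebra_simps)
  also have "\<dots> \<le> exp (\<rho> * (z - 1))"
    by (rule exp_ge_add_one_self)
  finally show ?thesis .
qed

text \<open>The generating function of an invariant law is determined by its atom at 0, so two invariant
  laws satisfy \<open>q\<^sub>0 p = p\<^sub>0 q\<close>; summing over all states gives \<open>p\<^sub>0 = q\<^sub>0\<close>, and the atom cannot vanish.\<close>
lemma md1_invariant_unique:
  assumes p: "md1_invariant \<rho> p" and q: "md1_invariant \<rho> q" and \<rho>: "0 \<le> \<rho>" "\<rho> < 1"
  shows "p = q"
proof -
  have scaled: "a * pmf p n = b * pmf q n"
    if "a * pmf p 0 = b * pmf q 0" for a b n
  proof (rule pgf_scaled_eq_imp_pmf_scaled_eq)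
    fix z :: real assume z: "0 < z" "z < 1"
    have "exp (\<rho> * (z - 1)) - z \<noteq> 0"
      using less_exp_md1[OF \<rho> z] by simp
    moreover have "a * pgf p z * (exp (\<rho> * (z - 1)) - z) = b * pgf q z * (exp (\<rho> * (z - 1)) - z)"
      using pgf_md1_invariant[OF p \<rho>(1), of z] pgf_md1_invariant[OF q \<rho>(1), of z] that z
      by (simp add: mult.assoc)
    ultimately show "a * pgf p z = b * pgf q z"
      by simp
  qed
  have cross: "pmf q 0 * pmf p n = pmf p 0 * pmf q n" for n
    by (rule scaled) simp
  have "(\<lambda>n. pmf q 0 * pmf p n) sums pmf q 0" "(\<lambda>n. pmf p 0 * pmf q n) sums pmf p 0"
    using sums_mult[OF sums_pmf_one] by fastforce+
  hence atoms: "pmf q 0 = pmf p 0"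
    using cross sums_unique2 by fastforce
  have "pmf p 0 \<noteq> 0"
  proof
    assume "pmf p 0 = 0"
    have "1 * pmf p n = 0 * pmf q n" for n
      by (rule scaled) (simp add: \<open>pmf p 0 = 0\<close>)
    hence "(\<lambda>n. pmf p n) = (\<lambda>_. 0)" by simp
    thus False using sums_pmf_one[of p] sums_unique2 by fastforce
  qed
  then show ?thesis
    using cross atoms by (intro pmf_eqI) simp
qed

section \<open>One step of the RBB process\<close>

definition bin_counts :: "nat \<Rightarrow> nat list \<Rightarrow> nat list" where
  "bin_counts L bs = map (count_list bs) [0..<L]"

definition rbb_update :: "nat list \<Rightarrow> nat list \<Rightarrow> nat list" where
  "rbb_update \<eta> b = map (\<lambda>(x, w, y). x - w + y) (zip \<eta> (zip (occupied \<eta>) b))"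

abbreviation uniform_bin :: "nat \<Rightarrow> nat pmf" where
  "uniform_bin L \<equiv> pmf_of_set {..<L}"

lemma multinomial_uniform_eq_bin_counts:
  "multinomial_uniform L k = map_pmf (bin_counts L) (replicate_pmf k (uniform_bin L))"
  by (simp add: multinomial_uniform_def bin_counts_def[abs_def])

lemma rbb_step_eq_update:
  "rbb_step L \<eta> = map_pmf (rbb_update \<eta>) (multinomial_uniform L (num_occupied \<eta>))"
  by (simp add: rbb_step_def rbb_update_def[abs_def])

lemma rbb_step_eq_throws:
  "rbb_step L \<eta> =
     map_pmf (\<lambda>bs. rbb_update \<eta> (bin_counts L bs)) (replicate_pmf (num_occupied \<eta>) (uniform_bin L))"
  by (simp add: rbb_step_eq_update multinomial_uniform_eq_bin_counts pmf.map_comp o_def)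

lemma set_pmf_uniform_bin: "0 < L \<Longrightarrow> set_pmf (uniform_bin L) = {..<L}"
  by (rule set_pmf_of_set) auto

lemma set_pmf_replicate_uniform_bin:
  "0 < L \<Longrightarrow> set_pmf (replicate_pmf k (uniform_bin L)) = {bs. length bs = k \<and> set bs \<subseteq> {..<L}}"
  by (auto simp: set_replicate_pmf set_pmf_uniform_bin)

lemma finite_set_pmf_replicate_uniform_bin:
  "0 < L \<Longrightarrow> finite (set_pmf (replicate_pmf k (uniform_bin L)))"
  using finite_lists_length_eq[of "{..<L}" k]
  by (simp add: set_pmf_replicate_uniform_bin conj_commute)

lemma length_bin_counts [simp]: "length (bin_counts L bs) = L"
  by (simp add: bin_counts_def)

lemma nth_bin_counts [simp]: "i < L \<Longrightarrow> bin_counts L bs ! i = count_list bs i"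
  by (simp add: bin_counts_def)

lemma sum_list_bin_counts: "set bs \<subseteq> {..<L} \<Longrightarrow> sum_list (bin_counts L bs) = length bs"
  using sum_count_set[of bs "{..<L}"]
  by (simp add: bin_counts_def sum_list_sum_nth atLeast0LessThan)

lemma length_rbb_update [simp]: "length b = length \<eta> \<Longrightarrow> length (rbb_update \<eta> b) = length \<eta>"
  by (simp add: rbb_update_def occupied_def)

lemma nth_rbb_update:
  "length b = length \<eta> \<Longrightarrow> i < length \<eta> \<Longrightarrow> rbb_update \<eta> b ! i = \<eta> ! i - 1 + b ! i"
  by (simp add: rbb_update_def occupied_def)

lemma num_occupied_eq_sum: "num_occupied \<eta> = (\<Sum>i<length \<eta>. of_bool (0 < \<eta> ! i))"
  by (simp add: num_occupied_def length_filter_conv_card lessThan_def Collect_conj_eq)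

lemma num_occupied_le_length: "num_occupied \<eta> \<le> length \<eta>"
  by (simp add: num_occupied_def)

lemma num_occupied_le_sum_list: "num_occupied \<eta> \<le> sum_list \<eta>"
  unfolding num_occupied_eq_sum sum_list_sum_nth atLeast0LessThan by (rule sum_mono) auto

lemma sum_list_rbb_update:
  assumes "length b = length \<eta>"
  shows "sum_list (rbb_update \<eta> b) = sum_list \<eta> - num_occupied \<eta> + sum_list b"
proof -
  have "(\<Sum>i<length \<eta>. \<eta> ! i - 1) = (\<Sum>i<length \<eta>. \<eta> ! i) - (\<Sum>i<length \<eta>. of_bool (0 < \<eta> ! i))"
    by (subst sum_subtractf_nat[symmetric]) (auto intro!: sum.cong)
  then show ?thesis
    using assms
    by (simp add: sum_list_sum_nth atLeast0LessThan nth_rbb_update sum.distrib num_occupied_eq_sum)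
qed

lemma finite_rbb_configs: "finite (rbb_configs L N)"
proof (rule finite_subset)
  show "rbb_configs L N \<subseteq> {xs. set xs \<subseteq> {..N} \<and> length xs = L}"
    using member_le_sum_list by (fastforce simp: rbb_configs_def)
qed (rule finite_lists_length_eq, simp)

lemma set_pmf_rbb_step_subset:
  assumes "0 < L" and "\<eta> \<in> rbb_configs L N"
  shows "set_pmf (rbb_step L \<eta>) \<subseteq> rbb_configs L N"
  using assms num_occupied_le_sum_list[of \<eta>]
  by (auto simp: rbb_step_eq_throws set_pmf_replicate_uniform_bin rbb_configs_def
        sum_list_rbb_update sum_list_bin_counts)

lemma finite_set_pmf_rbb_step: "0 < L \<Longrightarrow> finite (set_pmf (rbb_step L \<eta>))"
  by (simp add: rbb_step_eq_throws finite_set_pmf_replicate_uniform_bin)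

section \<open>Uniqueness of the stationary distribution\<close>

lemma pmf_bind_pmf_finite_support:
  assumes "finite S" and "set_pmf p \<subseteq> S"
  shows "pmf (bind_pmf p K) y = (\<Sum>x\<in>S. pmf p x * pmf (K x) y)"
  unfolding pmf_bind
  by (subst integral_measure_pmf_real[of S]) (use assms in \<open>auto simp: mult.commute\<close>)

lemma sum_abs_fixed_point_le:
  fixes d :: "'a \<Rightarrow> real"
  assumes "finite S" and M_nonneg: "\<And>x y. x \<in> S \<Longrightarrow> 0 \<le> M x y"
    and M_rows: "\<And>x. x \<in> S \<Longrightarrow> (\<Sum>y\<in>S. M x y) = c"
    and d_eq: "\<And>y. d y = (\<Sum>x\<in>S. d x * M x y)"
  shows "(\<Sum>y\<in>S. \<bar>d y\<bar>) \<le> c * (\<Sum>x\<in>S. \<bar>d x\<bar>)"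
proof -
  have "(\<Sum>y\<in>S. \<bar>d y\<bar>) \<le> (\<Sum>y\<in>S. \<Sum>x\<in>S. \<bar>d x\<bar> * M x y)"
  proof (rule sum_mono)
    fix y
    have "\<bar>d y\<bar> \<le> (\<Sum>x\<in>S. \<bar>d x * M x y\<bar>)"
      unfolding d_eq[of y] by (rule sum_abs)
    also have "\<dots> = (\<Sum>x\<in>S. \<bar>d x\<bar> * M x y)"
      using M_nonneg by (intro sum.cong) (auto simp: abs_mult)
    finally show "\<bar>d y\<bar> \<le> (\<Sum>x\<in>S. \<bar>d x\<bar> * M x y)" .
  qed
  also have "\<dots> = (\<Sum>x\<in>S. \<bar>d x\<bar> * (\<Sum>y\<in>S. M x y))"
    by (subst sum.swap) (simp add: sum_distrib_left)
  also have "\<dots> = c * (\<Sum>x\<in>S. \<bar>d x\<bar>)"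
    using M_rows by (simp add: sum_distrib_left mult.commute)
  finally show ?thesis .
qed

text \<open>Doeblin's argument: if some state \<open>s\<close> is hit in one step from everywhere, with probability
  at least \<open>\<delta> > 0\<close>, then removing this common mass leaves a kernel with row sums \<open>1 - \<delta>\<close> that
  still fixes the difference of two stationary laws, which therefore vanishes.\<close>
lemma stationary_pmf_unique_of_common_target:
  fixes K :: "'a \<Rightarrow> 'a pmf"
  assumes S: "finite S" "\<And>x. x \<in> S \<Longrightarrow> set_pmf (K x) \<subseteq> S"
    and s: "s \<in> S" "\<And>x. x \<in> S \<Longrightarrow> 0 < pmf (K x) s"
    and p: "set_pmf p \<subseteq> S" "bind_pmf p K = p"
    and q: "set_pmf q \<subseteq> S" "bind_pmf q K = q"
  shows "p = q"
proof -
  define \<delta> where "\<delta> = Min ((\<lambda>x. pmf (K x) s) ` S)"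
  have "0 < \<delta>"
    unfolding \<delta>_def using S s by (subst Min_gr_iff) auto
  have "\<And>x. x \<in> S \<Longrightarrow> \<delta> \<le> pmf (K x) s"
    unfolding \<delta>_def using S(1) by simp
  define M where "M x y = pmf (K x) y - (if y = s then \<delta> else 0)" for x y
  have M_nonneg: "0 \<le> M x y" if "x \<in> S" for x y
    using \<open>x \<in> S \<Longrightarrow> \<delta> \<le> pmf (K x) s\<close> that by (simp add: M_def)
  have M_rows: "(\<Sum>y\<in>S. M x y) = 1 - \<delta>" if "x \<in> S" for x
    using sum_pmf_eq_1[OF S(1) S(2)[OF that]] s(1) S(1) by (simp add: M_def sum_subtractf)
  define d where "d x = pmf p x - pmf q x" for x
  have d_mass: "(\<Sum>x\<in>S. d x) = 0"
    using sum_pmf_eq_1[OF S(1) p(1)] sum_pmf_eq_1[OF S(1) q(1)] by (simp add: d_def sum_subtractf)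
  have d_eq: "d y = (\<Sum>x\<in>S. d x * M x y)" for y
  proof -
    have "d y = (\<Sum>x\<in>S. d x * pmf (K x) y)"
      using pmf_bind_pmf_finite_support[OF S(1) p(1), of K y]
        pmf_bind_pmf_finite_support[OF S(1) q(1), of K y] p(2) q(2)
      by (simp add: d_def sum_subtractf left_diff_distrib)
    then show ?thesis
      using d_mass by (simp add: M_def right_diff_distrib sum_subtractf flip: sum_distrib_right)
  qed
  have "(\<Sum>y\<in>S. \<bar>d y\<bar>) \<le> (1 - \<delta>) * (\<Sum>x\<in>S. \<bar>d x\<bar>)"
    using S(1) M_nonneg M_rows d_eq by (rule sum_abs_fixed_point_le)
  hence "\<delta> * (\<Sum>y\<in>S. \<bar>d y\<bar>) \<le> 0"
    by (simp add: algebra_simps)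
  hence "(\<Sum>y\<in>S. \<bar>d y\<bar>) \<le> 0"
    using \<open>0 < \<delta>\<close> by (simp add: mult_le_0_iff)
  hence "(\<Sum>y\<in>S. \<bar>d y\<bar>) = 0"
    by (simp add: order.antisym sum_nonneg)
  hence "pmf p y = pmf q y" if "y \<in> S" for y
    using that S(1) by (simp add: d_def sum_nonneg_eq_0_iff)
  moreover have "pmf p y = pmf q y" if "y \<notin> S" for y
    using that p(1) q(1) by (metis pmf_eq_0_set_pmf subsetD)
  ultimately show ?thesis
    by (metis pmf_eqI)
qed

fun rbb_steps :: "nat \<Rightarrow> nat \<Rightarrow> nat list \<Rightarrow> nat list pmf" where
  "rbb_steps L 0 \<eta> = return_pmf \<eta>"
| "rbb_steps L (Suc n) \<eta> = bind_pmf (rbb_step L \<eta>) (rbb_steps L n)"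

lemma rbb_stationary_bind_rbb_steps:
  assumes "rbb_stationary L N \<nu>"
  shows "bind_pmf \<nu> (rbb_steps L n) = \<nu>"
proof (induction n)
  case (Suc n)
  have "rbb_steps L (Suc n) = (\<lambda>\<eta>. bind_pmf (rbb_step L \<eta>) (rbb_steps L n))"
    by (rule ext) simp
  hence "bind_pmf \<nu> (rbb_steps L (Suc n)) = bind_pmf (bind_pmf \<nu> (rbb_step L)) (rbb_steps L n)"
    by (simp add: bind_assoc_pmf)
  also have "\<dots> = bind_pmf \<nu> (rbb_steps L n)"
    using assms by (simp add: rbb_stationary_def)
  finally show ?case
    using Suc.IH by (rule trans)
qed (simp add: bind_return_pmf')

lemma set_pmf_rbb_steps_subset:
  "0 < L \<Longrightarrow> \<eta> \<in> rbb_configs L N \<Longrightarrow> set_pmf (rbb_steps L n \<eta>) \<subseteq> rbb_configs L N"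
  by (induction n arbitrary: \<eta>) (auto dest!: set_pmf_rbb_step_subset)

definition rbb_gather :: "nat \<Rightarrow> nat list \<Rightarrow> nat list" where
  "rbb_gather L \<eta> = rbb_update \<eta> (bin_counts L (replicate (num_occupied \<eta>) 0))"

lemma rbb_gather_in_set_pmf_rbb_step: "0 < L \<Longrightarrow> rbb_gather L \<eta> \<in> set_pmf (rbb_step L \<eta>)"
  by (auto simp: rbb_step_eq_throws rbb_gather_def set_pmf_replicate_uniform_bin)

lemma funpow_rbb_gather_in_set_pmf_rbb_steps:
  "0 < L \<Longrightarrow> (rbb_gather L ^^ n) \<eta> \<in> set_pmf (rbb_steps L n \<eta>)"
  by (induction n arbitrary: \<eta>)
     (auto simp: funpow_Suc_right simp del: funpow.simps intro!: rbb_gather_in_set_pmf_rbb_step)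

lemma funpow_rbb_gather:
  assumes "0 < L" and "\<eta> \<in> rbb_configs L N"
  shows "(rbb_gather L ^^ n) \<eta> \<in> rbb_configs L N \<and>
         (\<forall>i. 0 < i \<longrightarrow> i < L \<longrightarrow> (rbb_gather L ^^ n) \<eta> ! i = \<eta> ! i - n)"
proof (induction n)
  case (Suc n)
  then show ?case
    using rbb_gather_in_set_pmf_rbb_step[OF assms(1)] set_pmf_rbb_step_subset[OF assms(1)]
    by (fastforce simp: rbb_gather_def nth_rbb_update rbb_configs_def)
qed (use assms(2) in simp)

lemma funpow_rbb_gather_all:
  assumes "0 < L" and "\<eta> \<in> rbb_configs L N"
  shows "(rbb_gather L ^^ N) \<eta> = N # replicate (L - 1) 0"
proof -
  define \<xi> where "\<xi> = (rbb_gather L ^^ N) \<eta>"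
  have \<xi>: "length \<xi> = L" "sum_list \<xi> = N" "\<And>i. 0 < i \<Longrightarrow> i < L \<Longrightarrow> \<xi> ! i = \<eta> ! i - N"
    using funpow_rbb_gather[OF assms, of N] by (auto simp: \<xi>_def rbb_configs_def)
  have "\<eta> ! i \<le> N" if "i < L" for i
    using member_le_sum_list[of "\<eta> ! i" \<eta>] assms(2) that by (auto simp: rbb_configs_def)
  hence tl: "tl \<xi> = replicate (L - 1) 0"
    using \<xi> by (intro nth_equalityI) (auto simp: nth_tl)
  moreover have "\<xi> = hd \<xi> # tl \<xi>"
    using \<xi>(1) assms(1) by (cases \<xi>) auto
  ultimately show ?thesis
    using \<xi>(2) unfolding \<xi>_def by (metis add_0_right sum_list.Cons sum_list_replicate mult_zero_right)
qed

theorem rbb_stationary_unique: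
  assumes "0 < L" and "rbb_stationary L N \<nu>" and "rbb_stationary L N \<nu>'"
  shows "\<nu> = \<nu>'"
proof (rule stationary_pmf_unique_of_common_target)
  let ?s = "N # replicate (L - 1) 0"
  show "finite (rbb_configs L N)"
    by (rule finite_rbb_configs)
  show "?s \<in> rbb_configs L N"
    using assms(1) by (simp add: rbb_configs_def)
  show "0 < pmf (rbb_steps L N \<eta>) ?s" if "\<eta> \<in> rbb_configs L N" for \<eta>
    using funpow_rbb_gather_in_set_pmf_rbb_steps[OF assms(1), of N \<eta>]
      funpow_rbb_gather_all[OF assms(1) that] by (simp add: pmf_positive)
qed (use assms set_pmf_rbb_steps_subset rbb_stationary_bind_rbb_steps in
      \<open>auto simp: rbb_stationary_def\<close>)

section \<open>Exchangeability of the stationary distribution\<close>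

lemma finite_set_pmf_rbb_stationary: "rbb_stationary L N \<nu> \<Longrightarrow> finite (set_pmf \<nu>)"
  using finite_rbb_configs by (auto simp: rbb_stationary_def intro: finite_subset)

lemma integrable_rbb_stationary:
  "rbb_stationary L N \<nu> \<Longrightarrow> integrable (measure_pmf \<nu>) (f :: nat list \<Rightarrow> real)"
  by (rule integrable_measure_pmf_finite[OF finite_set_pmf_rbb_stationary])

lemma expectation_rbb_stationary_cong:
  fixes f g :: "nat list \<Rightarrow> real"
  assumes "rbb_stationary L N \<nu>" and "\<And>\<eta>. length \<eta> = L \<Longrightarrow> sum_list \<eta> = N \<Longrightarrow> f \<eta> = g \<eta>"
  shows "measure_pmf.expectation \<nu> f = measure_pmf.expectation \<nu> g"
  using assms by (intro integral_cong_AE) (auto simp: AE_measure_pmf_iff rbb_stationary_def rbb_configs_def)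

lemma permute_list_rbb_update:
  assumes "\<sigma> permutes {..<length \<eta>}" and "length b = length \<eta>"
  shows "permute_list \<sigma> (rbb_update \<eta> b) = rbb_update (permute_list \<sigma> \<eta>) (permute_list \<sigma> b)"
  using assms permutes_in_image[OF assms(1)]
  by (intro nth_equalityI) (auto simp: permute_list_nth nth_rbb_update)

lemma num_occupied_permute_list:
  assumes "\<sigma> permutes {..<length \<eta>}"
  shows "num_occupied (permute_list \<sigma> \<eta>) = num_occupied \<eta>"
  using mset_permute_list[OF assms] mset_filter
  by (metis num_occupied_def size_mset)

lemma sum_list_permute_list:
  "\<sigma> permutes {..<length xs} \<Longrightarrow> sum_list (permute_list \<sigma> xs) = sum_list (xs :: nat list)"
  by (metis mset_permute_list sum_mset_sum_list)

lemma permute_list_bin_counts: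
  assumes "\<sigma> permutes {..<L}" and "set bs \<subseteq> {..<L}"
  shows "permute_list \<sigma> (bin_counts L bs) = bin_counts L (map (inv \<sigma>) bs)"
proof (rule nth_equalityI)
  fix i assume "i < length (permute_list \<sigma> (bin_counts L bs))"
  hence i: "i < L" by simp
  have "inv \<sigma> x = i \<longleftrightarrow> x = \<sigma> i" for x
    using permutes_inverses[OF assms(1)] by metis
  hence "count_list bs (\<sigma> i) = count_list (map (inv \<sigma>) bs) i"
    by (induction bs) auto
  then show "permute_list \<sigma> (bin_counts L bs) ! i = bin_counts L (map (inv \<sigma>) bs) ! i"
    using i assms(1) permutes_in_image[OF assms(1)] by (simp add: permute_list_nth)
qed simp

lemma map_pmf_map_replicate_pmf:
  "map_pmf (map f) (replicate_pmf k p) = replicate_pmf k (map_pmf f p)"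
proof (induction k)
  case (Suc k)
  have "map_pmf (map f) (replicate_pmf (Suc k) p) =
        bind_pmf p (\<lambda>x. bind_pmf (replicate_pmf k p) (\<lambda>xs. return_pmf (f x # map f xs)))"
    by (simp add: map_bind_pmf)
  also have "\<dots> = bind_pmf (map_pmf f p)
      (\<lambda>x. bind_pmf (map_pmf (map f) (replicate_pmf k p)) (\<lambda>xs. return_pmf (x # xs)))"
    by (simp add: bind_map_pmf)
  finally show ?case
    by (simp add: Suc.IH)
qed simp

lemma map_permute_list_multinomial_uniform:
  assumes "0 < L" and "\<sigma> permutes {..<L}"
  shows "map_pmf (permute_list \<sigma>) (multinomial_uniform L k) = multinomial_uniform L k"
proof -
  have "map_pmf (inv \<sigma>) (uniform_bin L) = uniform_bin L"
    using assms by (intro map_pmf_of_set_bij_betw permutes_imp_bij permutes_inv) auto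
  hence "map_pmf (map (inv \<sigma>)) (replicate_pmf k (uniform_bin L)) = replicate_pmf k (uniform_bin L)"
    by (simp add: map_pmf_map_replicate_pmf)
  moreover have "map_pmf (permute_list \<sigma>) (multinomial_uniform L k) =
      map_pmf (bin_counts L) (map_pmf (map (inv \<sigma>)) (replicate_pmf k (uniform_bin L)))"
    unfolding multinomial_uniform_eq_bin_counts pmf.map_comp o_def
    using assms by (intro map_pmf_cong refl)
      (auto simp: set_pmf_replicate_uniform_bin permute_list_bin_counts)
  ultimately show ?thesis
    by (simp add: multinomial_uniform_eq_bin_counts)
qed

lemma rbb_step_permute_list:
  assumes "0 < L" and "length \<eta> = L" and "\<sigma> permutes {..<L}"
  shows "rbb_step L (permute_list \<sigma> \<eta>) = map_pmf (permute_list \<sigma>) (rbb_step L \<eta>)"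
proof -
  let ?B = "multinomial_uniform L (num_occupied \<eta>)"
  have "map_pmf (permute_list \<sigma>) (rbb_step L \<eta>) =
        map_pmf (\<lambda>b. rbb_update (permute_list \<sigma> \<eta>) (permute_list \<sigma> b)) ?B"
    unfolding rbb_step_eq_update pmf.map_comp o_def
    using assms by (intro map_pmf_cong refl permute_list_rbb_update)
      (auto simp: multinomial_uniform_eq_bin_counts)
  also have "\<dots> = map_pmf (rbb_update (permute_list \<sigma> \<eta>)) (map_pmf (permute_list \<sigma>) ?B)"
    by (simp add: pmf.map_comp o_def)
  also have "\<dots> = rbb_step L (permute_list \<sigma> \<eta>)"
    using assms by (simp add: rbb_step_eq_update map_permute_list_multinomial_uniform
        num_occupied_permute_list)
  finally show ?thesis by simp
qed

theorem rbb_stationary_permute_list: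
  assumes "0 < L" and st: "rbb_stationary L N \<nu>" and \<sigma>: "\<sigma> permutes {..<L}"
  shows "map_pmf (permute_list \<sigma>) \<nu> = \<nu>"
proof (rule rbb_stationary_unique[OF assms(1) _ st])
  have supp: "set_pmf \<nu> \<subseteq> rbb_configs L N"
    using st by (simp add: rbb_stationary_def)
  have "bind_pmf (map_pmf (permute_list \<sigma>) \<nu>) (rbb_step L) =
        bind_pmf \<nu> (\<lambda>\<eta>. map_pmf (permute_list \<sigma>) (rbb_step L \<eta>))"
    unfolding bind_map_pmf
    using supp by (intro bind_pmf_cong refl rbb_step_permute_list[OF assms(1) _ \<sigma>])
      (auto simp: rbb_configs_def)
  also have "\<dots> = map_pmf (permute_list \<sigma>) (bind_pmf \<nu> (rbb_step L))"
    by (simp add: map_bind_pmf)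
  also have "\<dots> = map_pmf (permute_list \<sigma>) \<nu>"
    using st by (simp add: rbb_stationary_def)
  finally show "rbb_stationary L N (map_pmf (permute_list \<sigma>) \<nu>)"
    using supp \<sigma> by (auto simp: rbb_stationary_def rbb_configs_def sum_list_permute_list)
qed

lemma expectation_rbb_stationary_permute_list:
  fixes f :: "nat list \<Rightarrow> real"
  assumes "0 < L" and st: "rbb_stationary L N \<nu>" and "\<sigma> permutes {..<L}"
  shows "measure_pmf.expectation \<nu> (\<lambda>\<eta>. f (permute_list \<sigma> \<eta>)) = measure_pmf.expectation \<nu> f"
proof -
  have "measure_pmf.expectation \<nu> (\<lambda>\<eta>. f (permute_list \<sigma> \<eta>)) =
        measure_pmf.expectation (map_pmf (permute_list \<sigma>) \<nu>) f"
    by simp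
  then show ?thesis
    by (simp only: rbb_stationary_permute_list[OF assms])
qed

lemma expectation_rbb_stationary_nth:
  fixes f :: "nat \<Rightarrow> real"
  assumes "0 < L" and st: "rbb_stationary L N \<nu>" and "i < L"
  shows "measure_pmf.expectation \<nu> (\<lambda>\<eta>. f (\<eta> ! i)) = measure_pmf.expectation \<nu> (\<lambda>\<eta>. f (\<eta> ! 0))"
proof -
  let ?\<sigma> = "Transposition.transpose 0 i"
  have "measure_pmf.expectation \<nu> (\<lambda>\<eta>. f (\<eta> ! 0)) =
        measure_pmf.expectation \<nu> (\<lambda>\<eta>. f (permute_list ?\<sigma> \<eta> ! 0))"
    using assms by (intro expectation_rbb_stationary_permute_list[symmetric] permutes_swap_id) auto
  also have "\<dots> = measure_pmf.expectation \<nu> (\<lambda>\<eta>. f (\<eta> ! i))"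
    using assms by (intro expectation_rbb_stationary_cong[OF st])
      (simp add: permute_list_nth permutes_swap_id Transposition.transpose_def)
  finally show ?thesis ..
qed

lemma expectation_rbb_stationary_nth2:
  fixes f :: "nat \<Rightarrow> nat \<Rightarrow> real"
  assumes "0 < L" and st: "rbb_stationary L N \<nu>" and "i < L" "j < L" "i \<noteq> j"
  shows "measure_pmf.expectation \<nu> (\<lambda>\<eta>. f (\<eta> ! i) (\<eta> ! j)) =
         measure_pmf.expectation \<nu> (\<lambda>\<eta>. f (\<eta> ! 0) (\<eta> ! 1))"
proof -
  define j' where "j' = Transposition.transpose 0 i j"
  define \<sigma> where "\<sigma> = Transposition.transpose 0 i \<circ> Transposition.transpose 1 j'"
  have "j' < L" "j' \<noteq> 0"
    using assms by (auto simp: j'_def Transposition.transpose_def)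
  hence \<sigma>: "\<sigma> permutes {..<L}" "\<sigma> 0 = i" "\<sigma> 1 = j"
    using assms by (auto simp: \<sigma>_def j'_def Transposition.transpose_def intro!: permutes_compose permutes_swap_id)
  have "measure_pmf.expectation \<nu> (\<lambda>\<eta>. f (\<eta> ! 0) (\<eta> ! 1)) =
        measure_pmf.expectation \<nu> (\<lambda>\<eta>. f (permute_list \<sigma> \<eta> ! 0) (permute_list \<sigma> \<eta> ! 1))"
    using assms \<sigma> by (intro expectation_rbb_stationary_permute_list[symmetric]) auto
  also have "\<dots> = measure_pmf.expectation \<nu> (\<lambda>\<eta>. f (\<eta> ! i) (\<eta> ! j))"
    using assms \<sigma> by (intro expectation_rbb_stationary_cong[OF st]) (simp add: permute_list_nth)
  finally show ?thesis ..
qed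

section \<open>Moment identities for the stationary distribution\<close>

declare sum_of_bool_eq [simp del]

lemma of_nat_pred: "real (n - 1) = real n - of_bool (0 < n)"
  by (cases n) auto

lemma of_num_occupied: "real (num_occupied \<eta>) = (\<Sum>i<length \<eta>. of_bool (0 < \<eta> ! i))"
  by (simp add: num_occupied_eq_sum)

lemma expectation_replicate_uniform_bin_Suc:
  fixes F :: "nat list \<Rightarrow> real"
  assumes "0 < L"
  shows "measure_pmf.expectation (replicate_pmf (Suc k) (uniform_bin L)) F =
         (\<Sum>x<L. measure_pmf.expectation (replicate_pmf k (uniform_bin L)) (\<lambda>bs. F (x # bs))) / L"
proof -
  have "measure_pmf.expectation (replicate_pmf (Suc k) (uniform_bin L)) F =
        measure_pmf.expectation (bind_pmf (uniform_bin L)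
          (\<lambda>x. map_pmf (Cons x) (replicate_pmf k (uniform_bin L)))) F"
    by (simp add: map_pmf_def)
  also have "\<dots> = (\<Sum>x\<in>{..<L}.
      measure_pmf.expectation (map_pmf (Cons x) (replicate_pmf k (uniform_bin L))) F /\<^sub>R card {..<L})"
    using assms finite_set_pmf_replicate_uniform_bin[OF assms]
    by (intro pmf_expectation_bind_pmf_of_set) auto
  also have "\<dots> = (\<Sum>x<L. measure_pmf.expectation (replicate_pmf k (uniform_bin L)) (\<lambda>bs. F (x # bs))) / L"
    by (simp add: sum_distrib_left divide_inverse_commute)
  finally show ?thesis .
qed

lemma expectation_power_count_first:
  fixes z :: real
  assumes "0 < L"
  shows "measure_pmf.expectation (replicate_pmf k (uniform_bin L)) (\<lambda>bs. z ^ (c + count_list bs 0)) =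
         z ^ c * ((real L - 1 + z) / L) ^ k"
proof (induction k arbitrary: c)
  case (Suc k)
  have count_Cons: "c + count_list (x # bs) 0 = (c + of_bool (x = 0)) + count_list bs 0" for x :: nat and bs
    by simp
  have "measure_pmf.expectation (replicate_pmf (Suc k) (uniform_bin L))
      (\<lambda>bs. z ^ (c + count_list bs 0)) = (\<Sum>x<L. z ^ (c + of_bool (x = 0)) * ((real L - 1 + z) / L) ^ k) / L"
    by (simp add: expectation_replicate_uniform_bin_Suc[OF assms] count_Cons Suc.IH
        del: count_list.simps replicate_pmf.simps)
  also have "\<dots> = (\<Sum>x<L. z ^ (c + of_bool (x = 0))) * ((real L - 1 + z) / L) ^ k / L"
    by (simp add: sum_distrib_right)
  also have "{..<L} = insert 0 {1..<L}"
    using assms by auto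
  hence "(\<Sum>x<L. z ^ (c + of_bool (x = 0))) = z ^ c * (L - 1 + z)"
    using assms by (simp add: algebra_simps)
  finally show ?case
    using assms by (simp add: field_simps)
qed simp

lemma expectation_sum_square_shifted_counts:
  fixes a :: "nat \<Rightarrow> real"
  assumes "0 < L"
  shows "measure_pmf.expectation (replicate_pmf k (uniform_bin L))
           (\<lambda>bs. \<Sum>i<L. (a i + count_list bs i)\<^sup>2) =
         (\<Sum>i<L. (a i)\<^sup>2) + 2 * real k * (\<Sum>i<L. a i) / L + real k + real k * (real k - 1) / L"
proof (induction k arbitrary: a)
  case (Suc k)
  define A where "A = (\<Sum>i<L. a i)"
  define Q where "Q = (\<Sum>i<L. (a i)\<^sup>2)"
  have throw: "measure_pmf.expectation (replicate_pmf k (uniform_bin L))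
         (\<lambda>bs. \<Sum>i<L. (a i + count_list (x # bs) i)\<^sup>2)
       = Q + 2 * a x + 1 + 2 * real k * (A + 1) / L + real k + real k * (real k - 1) / L"
    if "x < L" for x
  proof -
    define a' where "a' i = a i + of_bool (x = i)" for i
    have "(\<lambda>bs. \<Sum>i<L. (a i + count_list (x # bs) i)\<^sup>2) =
          (\<lambda>bs. \<Sum>i<L. (a' i + count_list bs i)\<^sup>2)"
      by (intro ext sum.cong) (auto simp: a'_def algebra_simps)
    moreover have "(a' i)\<^sup>2 = (a i)\<^sup>2 + (if x = i then 2 * a i + 1 else 0)" for i
      by (simp add: a'_def power2_eq_square algebra_simps)
    hence "(\<Sum>i<L. (a' i)\<^sup>2) = Q + 2 * a x + 1"
      using that by (simp add: sum.distrib Q_def)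
    moreover have "(\<Sum>i<L. a' i) = A + 1"
      using that by (simp add: a'_def sum.distrib A_def of_bool_def)
    ultimately show ?thesis
      by (simp add: Suc.IH)
  qed
  have "measure_pmf.expectation (replicate_pmf (Suc k) (uniform_bin L))
          (\<lambda>bs. \<Sum>i<L. (a i + count_list bs i)\<^sup>2) =
        (\<Sum>x<L. Q + 2 * a x + 1 + 2 * real k * (A + 1) / L + real k + real k * (real k - 1) / L) / L"
    using throw by (simp add: expectation_replicate_uniform_bin_Suc[OF assms] del: replicate_pmf.simps)
  also have "\<dots> = (L * (Q + 1 + 2 * real k * (A + 1) / L + real k + real k * (real k - 1) / L) + 2 * A) / L"
    by (simp add: sum.distrib A_def algebra_simps flip: sum_distrib_right)
  also have "\<dots> = Q + 2 * real (Suc k) * A / L + real (Suc k) + real (Suc k) * (real (Suc k) - 1) / L"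
    using assms by (simp add: field_simps)
  finally show ?case
    by (simp add: Q_def A_def)
qed simp

lemma expectation_rbb_step_sum_squares:
  assumes "0 < L" and "length \<eta> = L" and "sum_list \<eta> = N"
  defines "K \<equiv> real (num_occupied \<eta>)"
  shows "measure_pmf.expectation (rbb_step L \<eta>) (\<lambda>\<xi>. \<Sum>i<L. (real (\<xi> ! i))\<^sup>2) =
         (\<Sum>i<L. (real (\<eta> ! i))\<^sup>2) - 2 * real N + 2 * K + (2 * real N * K - K\<^sup>2 - K) / L"
proof -
  define a where "a i = real (\<eta> ! i) - of_bool (0 < \<eta> ! i)" for i
  have N: "(\<Sum>i<L. real (\<eta> ! i)) = N"
    using assms by (simp add: sum_list_sum_nth atLeast0LessThan flip: of_nat_sum)
  have K: "(\<Sum>i<L. of_bool (0 < \<eta> ! i)) = K"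
    using assms by (simp add: of_num_occupied)
  have A: "(\<Sum>i<L. a i) = N - K"
    using N K by (simp add: a_def sum_subtractf)
  have "(a i)\<^sup>2 = (real (\<eta> ! i))\<^sup>2 - 2 * real (\<eta> ! i) + of_bool (0 < \<eta> ! i)" for i
    by (simp add: a_def power2_eq_square algebra_simps)
  hence Q: "(\<Sum>i<L. (a i)\<^sup>2) = (\<Sum>i<L. (real (\<eta> ! i))\<^sup>2) - 2 * real N + K"
    using N K by (simp add: sum.distrib sum_subtractf flip: sum_distrib_left)
  have "measure_pmf.expectation (rbb_step L \<eta>) (\<lambda>\<xi>. \<Sum>i<L. (real (\<xi> ! i))\<^sup>2) =
      measure_pmf.expectation (replicate_pmf (num_occupied \<eta>) (uniform_bin L))
        (\<lambda>bs. \<Sum>i<L. (a i + count_list bs i)\<^sup>2)"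
    using assms unfolding rbb_step_eq_throws integral_map_pmf
    by (intro Bochner_Integration.integral_cong refl sum.cong)
       (simp_all add: nth_rbb_update a_def of_nat_pred)
  also have "\<dots> = (\<Sum>i<L. (a i)\<^sup>2) + 2 * K * (\<Sum>i<L. a i) / L + K + K * (K - 1) / L"
    unfolding K_def by (rule expectation_sum_square_shifted_counts[OF assms(1)])
  finally show ?thesis
    unfolding A Q by (simp add: diff_divide_distrib add_divide_distrib power2_eq_square algebra_simps)
qed

lemma expectation_rbb_step_power_first:
  fixes z :: real
  assumes "0 < L" and "length \<eta> = L"
  shows "measure_pmf.expectation (rbb_step L \<eta>) (\<lambda>\<xi>. z ^ (\<xi> ! 0)) =
         z ^ (\<eta> ! 0 - 1) * ((real L - 1 + z) / L) ^ num_occupied \<eta>"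
proof -
  have "measure_pmf.expectation (rbb_step L \<eta>) (\<lambda>\<xi>. z ^ (\<xi> ! 0)) =
        measure_pmf.expectation (replicate_pmf (num_occupied \<eta>) (uniform_bin L))
          (\<lambda>bs. z ^ ((\<eta> ! 0 - 1) + count_list bs 0))"
    unfolding rbb_step_eq_throws integral_map_pmf
    using assms by (intro Bochner_Integration.integral_cong refl) (simp add: nth_rbb_update)
  then show ?thesis
    using expectation_power_count_first[OF assms(1)] by simp
qed

lemma expectation_rbb_stationary_step:
  fixes f :: "nat list \<Rightarrow> real"
  assumes "0 < L" and st: "rbb_stationary L N \<nu>"
  shows "measure_pmf.expectation \<nu> f =
         measure_pmf.expectation \<nu> (\<lambda>\<eta>. measure_pmf.expectation (rbb_step L \<eta>) f)"
proof -
  have supp: "set_pmf \<nu> \<subseteq> rbb_configs L N"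
    using st by (simp add: rbb_stationary_def)
  have "measure_pmf.expectation \<nu> f = measure_pmf.expectation (bind_pmf \<nu> (rbb_step L)) f"
    using st by (simp add: rbb_stationary_def)
  also have "\<dots> = (\<Sum>\<eta>\<in>rbb_configs L N. pmf \<nu> \<eta> *\<^sub>R measure_pmf.expectation (rbb_step L \<eta>) f)"
    using supp finite_rbb_configs finite_set_pmf_rbb_step[OF assms(1)]
    by (intro pmf_expectation_bind) auto
  also have "\<dots> = measure_pmf.expectation \<nu> (\<lambda>\<eta>. measure_pmf.expectation (rbb_step L \<eta>) f)"
    using supp by (subst integral_measure_pmf[OF finite_rbb_configs]) auto
  finally show ?thesis .
qed

lemma rbb_stationary_pgf_first:
  fixes z :: real
  assumes "0 < L" and st: "rbb_stationary L N \<nu>"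
  shows "measure_pmf.expectation \<nu> (\<lambda>\<eta>. z ^ (\<eta> ! 0)) =
         measure_pmf.expectation \<nu> (\<lambda>\<eta>. z ^ (\<eta> ! 0 - 1) * ((real L - 1 + z) / L) ^ num_occupied \<eta>)"
proof -
  have "measure_pmf.expectation \<nu> (\<lambda>\<eta>. z ^ (\<eta> ! 0)) =
        measure_pmf.expectation \<nu> (\<lambda>\<eta>. measure_pmf.expectation (rbb_step L \<eta>) (\<lambda>\<xi>. z ^ (\<xi> ! 0)))"
    by (rule expectation_rbb_stationary_step[OF assms])
  also have "\<dots> = measure_pmf.expectation \<nu>
      (\<lambda>\<eta>. z ^ (\<eta> ! 0 - 1) * ((real L - 1 + z) / L) ^ num_occupied \<eta>)"
    using assms(1) by (intro expectation_rbb_stationary_cong[OF st] expectation_rbb_step_power_first)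
  finally show ?thesis .
qed

lemma expectation_num_occupied:
  assumes "0 < L" and st: "rbb_stationary L N \<nu>"
  shows "measure_pmf.expectation \<nu> (\<lambda>\<eta>. real (num_occupied \<eta>)) =
         L * measure_pmf.expectation \<nu> (\<lambda>\<eta>. of_bool (0 < \<eta> ! 0))"
proof -
  have "measure_pmf.expectation \<nu> (\<lambda>\<eta>. real (num_occupied \<eta>)) =
        measure_pmf.expectation \<nu> (\<lambda>\<eta>. \<Sum>i<L. of_bool (0 < \<eta> ! i))"
    by (intro expectation_rbb_stationary_cong[OF st]) (simp add: of_num_occupied)
  also have "\<dots> = (\<Sum>i<L. measure_pmf.expectation \<nu> (\<lambda>\<eta>. of_bool (0 < \<eta> ! i)))"
    by (simp add: integrable_rbb_stationary[OF st])
  also have "\<dots> = (\<Sum>i<L. measure_pmf.expectation \<nu> (\<lambda>\<eta>. of_bool (0 < \<eta> ! 0)))"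
    by (intro sum.cong refl expectation_rbb_stationary_nth[OF assms]) simp
  finally show ?thesis by simp
qed

lemma expectation_num_occupied_sq:
  assumes "0 < L" and st: "rbb_stationary L N \<nu>"
  defines "p \<equiv> measure_pmf.expectation \<nu> (\<lambda>\<eta>. of_bool (0 < \<eta> ! 0))"
    and "q \<equiv> measure_pmf.expectation \<nu> (\<lambda>\<eta>. of_bool (0 < \<eta> ! 0) * of_bool (0 < \<eta> ! 1))"
  shows "measure_pmf.expectation \<nu> (\<lambda>\<eta>. (real (num_occupied \<eta>))\<^sup>2) = L * p + L * (real L - 1) * q"
proof -
  have pair: "measure_pmf.expectation \<nu> (\<lambda>\<eta>. of_bool (0 < \<eta> ! i) * of_bool (0 < \<eta> ! j)) =
              (if i = j then p else q)" if "i < L" "j < L" for i j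
  proof (cases "i = j")
    case True
    have "measure_pmf.expectation \<nu> (\<lambda>\<eta>. of_bool (0 < \<eta> ! i) * of_bool (0 < \<eta> ! j)) =
          measure_pmf.expectation \<nu> (\<lambda>\<eta>. of_bool (0 < \<eta> ! i) :: real)"
      using True by (intro Bochner_Integration.integral_cong) auto
    then show ?thesis
      using True expectation_rbb_stationary_nth[OF assms(1,2) that(1), of "\<lambda>x. of_bool (0 < x)"]
      by (simp add: p_def)
  next
    case False
    then show ?thesis
      using expectation_rbb_stationary_nth2[OF assms(1,2) that False,
          of "\<lambda>x y. of_bool (0 < x) * of_bool (0 < y)"] by (simp add: q_def)
  qed
  have "measure_pmf.expectation \<nu> (\<lambda>\<eta>. (real (num_occupied \<eta>))\<^sup>2) =
        measure_pmf.expectation \<nu> (\<lambda>\<eta>. \<Sum>i<L. \<Sum>j<L. of_bool (0 < \<eta> ! i) * of_bool (0 < \<eta> ! j))"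
    by (intro expectation_rbb_stationary_cong[OF st])
       (simp add: of_num_occupied power2_eq_square sum_product)
  also have "\<dots> = (\<Sum>i<L. \<Sum>j<L.
      measure_pmf.expectation \<nu> (\<lambda>\<eta>. of_bool (0 < \<eta> ! i) * of_bool (0 < \<eta> ! j)))"
    by (subst Bochner_Integration.integral_sum, rule integrable_rbb_stationary[OF st])
       (intro sum.cong refl Bochner_Integration.integral_sum integrable_rbb_stationary[OF st])
  also have "\<dots> = (\<Sum>i<L. \<Sum>j<L. if i = j then p else q)"
    using pair by (intro sum.cong refl) auto
  also have "\<dots> = (\<Sum>i<L. p + (real L - 1) * q)"
  proof (intro sum.cong refl)
    fix i assume "i \<in> {..<L}"
    have "(\<Sum>j<L. if i = j then p else q) = (\<Sum>j<L. q + (if i = j then p - q else 0))"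
      by (intro sum.cong) auto
    also have "\<dots> = L * q + (p - q)"
      using \<open>i \<in> {..<L}\<close> by (simp add: sum.distrib)
    finally show "(\<Sum>j<L. if i = j then p else q) = p + (real L - 1) * q"
      by (simp add: algebra_simps)
  qed
  finally show ?thesis
    by (simp add: algebra_simps)
qed


text \<open>Stationarity of \<open>E \<Sum>\<^sub>i \<eta>\<^sub>i\<^sup>2\<close>, rewritten through exchangeability.\<close>
lemma rbb_stationary_balance:
  assumes "0 < L" and st: "rbb_stationary L N \<nu>"
  defines "p \<equiv> measure_pmf.expectation \<nu> (\<lambda>\<eta>. of_bool (0 < \<eta> ! 0))"
    and "q \<equiv> measure_pmf.expectation \<nu> (\<lambda>\<eta>. of_bool (0 < \<eta> ! 0) * of_bool (0 < \<eta> ! 1))"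
  shows "2 * real N = 2 * real L * p + 2 * real N * p - 2 * p - (real L - 1) * q"
proof -
  define S where "S \<eta> = (\<Sum>i<L. (real (\<eta> ! i))\<^sup>2)" for \<eta> :: "nat list"
  define K where "K \<eta> = real (num_occupied \<eta>)" for \<eta>
  have "measure_pmf.expectation \<nu> S =
        measure_pmf.expectation \<nu> (\<lambda>\<eta>. measure_pmf.expectation (rbb_step L \<eta>) S)"
    by (rule expectation_rbb_stationary_step[OF assms(1) st])
  also have "\<dots> = measure_pmf.expectation \<nu>
      (\<lambda>\<eta>. S \<eta> - 2 * real N + 2 * K \<eta> + (2 * real N * K \<eta> - (K \<eta>)\<^sup>2 - K \<eta>) / L)"
    unfolding S_def K_def
    using assms(1) by (intro expectation_rbb_stationary_cong[OF st] expectation_rbb_step_sum_squares) auto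
  also have "\<dots> = measure_pmf.expectation \<nu> S - 2 * real N + 2 * measure_pmf.expectation \<nu> K +
      (2 * real N * measure_pmf.expectation \<nu> K - measure_pmf.expectation \<nu> (\<lambda>\<eta>. (K \<eta>)\<^sup>2)
        - measure_pmf.expectation \<nu> K) / L"
    by (simp add: integrable_rbb_stationary[OF st] diff_divide_distrib)
  finally have "0 = - 2 * real N + 2 * measure_pmf.expectation \<nu> K +
      (2 * real N * measure_pmf.expectation \<nu> K - measure_pmf.expectation \<nu> (\<lambda>\<eta>. (K \<eta>)\<^sup>2)
        - measure_pmf.expectation \<nu> K) / L"
    by simp
  then have "real L * (2 * real N) = real L * (2 * real L * p + 2 * real N * p - 2 * p - (real L - 1) * q)"
    using assms(1) unfolding K_def expectation_num_occupied[OF assms(1) st]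
      expectation_num_occupied_sq[OF assms(1) st] p_def[symmetric] q_def[symmetric]
    by (simp add: field_simps)
  then show ?thesis
    using assms(1) by simp
qed

lemma expectation_truncation_bound:
  fixes p :: "nat pmf" and f :: "nat \<Rightarrow> real"
  assumes f: "\<And>n. \<bar>f n\<bar> \<le> B"
  shows "\<bar>measure_pmf.expectation p f - (\<Sum>n<M. pmf p n * f n)\<bar> \<le> B * (1 - (\<Sum>n<M. pmf p n))"
proof -
  have tail: "(\<lambda>n. pmf p (n + M) * f (n + M)) sums (measure_pmf.expectation p f - (\<Sum>n<M. pmf p n * f n))"
    using sums_split_initial_segment[OF sums_pmf_expectation[OF f]] .
  have bound: "(\<lambda>n. B * pmf p (n + M)) sums (B * (1 - (\<Sum>n<M. pmf p n)))"
    using sums_mult[OF sums_split_initial_segment[OF sums_pmf_one]] .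
  have term_bound: "\<bar>pmf p (n + M) * f (n + M)\<bar> \<le> B * pmf p (n + M)" for n
    using mult_right_mono[OF f[of "n + M"] pmf_nonneg[of p "n + M"]] by (simp add: abs_mult mult.commute)
  have "- (B * pmf p (n + M)) \<le> pmf p (n + M) * f (n + M)" "pmf p (n + M) * f (n + M) \<le> B * pmf p (n + M)"
    for n using term_bound[of n] unfolding abs_le_iff by linarith+
  then show ?thesis
    using sums_le[OF _ tail bound] sums_le[OF _ sums_minus[OF bound] tail] by (auto simp: abs_le_iff)
qed

lemma tendsto_expectation_of_tendsto_pmf:
  fixes P :: "'b \<Rightarrow> nat pmf" and f :: "nat \<Rightarrow> real"
  assumes pmf_lim: "\<And>n. ((\<lambda>L. pmf (P L) n) \<longlongrightarrow> pmf \<mu> n) F" and f: "\<And>n. \<bar>f n\<bar> \<le> B"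
  shows "((\<lambda>L. measure_pmf.expectation (P L) f) \<longlongrightarrow> measure_pmf.expectation \<mu> f) F"
proof (rule tendstoI)
  fix e :: real assume "0 < e"
  have "0 \<le> B" using f[of 0] by linarith
  define d where "d = e / (4 * (B + 1))"
  have "0 < d" using \<open>0 < e\<close> \<open>0 \<le> B\<close> by (simp add: d_def)
  have "4 * B * d < e"
    using \<open>0 < e\<close> \<open>0 \<le> B\<close> by (simp add: d_def field_simps)
  have "\<forall>\<^sub>F M in sequentially. 1 - d < (\<Sum>n<M. pmf \<mu> n)"
    using sums_pmf_one[of \<mu>] \<open>0 < d\<close> unfolding sums_def by (intro order_tendstoD(1)) auto
  then obtain M where M: "1 - d < (\<Sum>n<M. pmf \<mu> n)"
    by (auto simp: eventually_sequentially)
  have "((\<lambda>L. \<Sum>n<M. \<bar>pmf (P L) n - pmf \<mu> n\<bar>) \<longlongrightarrow> (\<Sum>n<M. \<bar>pmf \<mu> n - pmf \<mu> n\<bar>)) F"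
    by (intro tendsto_intros pmf_lim)
  hence "\<forall>\<^sub>F L in F. (\<Sum>n<M. \<bar>pmf (P L) n - pmf \<mu> n\<bar>) < d"
    using \<open>0 < d\<close> by (intro order_tendstoD(2)) auto
  then show "\<forall>\<^sub>F L in F. dist (measure_pmf.expectation (P L) f) (measure_pmf.expectation \<mu> f) < e"
  proof eventually_elim
    case (elim L)
    define D where "D = (\<Sum>n<M. \<bar>pmf (P L) n - pmf \<mu> n\<bar>)"
    have "\<bar>(\<Sum>n<M. pmf (P L) n * f n) - (\<Sum>n<M. pmf \<mu> n * f n)\<bar> \<le> (\<Sum>n<M. \<bar>pmf (P L) n - pmf \<mu> n\<bar> * B)"
      unfolding sum_subtractf[symmetric] left_diff_distrib[symmetric]
      by (rule order.trans[OF sum_abs sum_mono]) (auto simp: abs_mult intro!: mult_left_mono f)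
    hence head: "\<bar>(\<Sum>n<M. pmf (P L) n * f n) - (\<Sum>n<M. pmf \<mu> n * f n)\<bar> \<le> B * D"
      by (simp add: D_def sum_distrib_left mult.commute)
    have "(\<Sum>n<M. pmf \<mu> n) - (\<Sum>n<M. pmf (P L) n) \<le> D"
      unfolding D_def sum_subtractf[symmetric] by (intro sum_mono) auto
    hence "B * (1 - (\<Sum>n<M. pmf (P L) n)) \<le> B * (2 * d)"
      using elim M \<open>0 \<le> B\<close> by (intro mult_left_mono) (auto simp: D_def)
    moreover have "B * (1 - (\<Sum>n<M. pmf \<mu> n)) \<le> B * d" "B * D \<le> B * d"
      using elim M \<open>0 \<le> B\<close> by (auto simp: D_def intro!: mult_left_mono)
    ultimately have "\<bar>measure_pmf.expectation (P L) f - measure_pmf.expectation \<mu> f\<bar> \<le> 4 * B * d"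
      using head expectation_truncation_bound[where f = f and B = B and p = "P L" and M = M, OF f]
        expectation_truncation_bound[where f = f and B = B and p = \<mu> and M = M, OF f]
      by linarith
    then show ?case
      using \<open>4 * B * d < e\<close> by (simp add: dist_real_def)
  qed
qed

lemma abs_exp_minus_le:
  fixes x :: real
  assumes "0 \<le> x"
  shows "\<bar>exp (- x) - (1 - x)\<bar> \<le> x\<^sup>2"
proof -
  have "exp (- x) \<le> 1 / (1 + x)"
    using exp_ge_add_one_self[of x] assms by (simp add: exp_minus field_simps)
  also have "\<dots> \<le> (1 - x) + x\<^sup>2"
    using assms by (simp add: field_simps power2_eq_square)
  finally show ?thesis
    using exp_minus_ge[of x] by simp
qed

lemma abs_exp_diff_le:
  fixes a b :: real
  assumes "a \<le> 0" "b \<le> 0"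
  shows "\<bar>exp a - exp b\<bar> \<le> \<bar>a - b\<bar>"
proof -
  have "exp u - exp v \<le> u - v" if "v \<le> u" "u \<le> 0" for u v :: real
  proof -
    have "exp u - exp v = exp u * (1 - exp (v - u))"
      by (simp add: algebra_simps exp_diff)
    also have "\<dots> \<le> 1 * (u - v)"
    proof (rule mult_mono)
      show "1 - exp (v - u) \<le> u - v"
        using exp_ge_add_one_self[of "v - u"] by linarith
    qed (use that in auto)
    finally show ?thesis by simp
  qed
  then show ?thesis
    using assms by (cases "b \<le> a") (auto simp: abs_le_iff)
qed

text \<open>\<open>((L - 1 + z) / L) ^ K\<close> generates the number of \<open>K\<close> uniformly thrown balls that land in a
  given bin; it is compared with the Poisson generating function of mean \<open>\<rho>\<close>.\<close>
lemma abs_thinning_power_exp_le: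
  fixes z \<rho> :: real
  assumes "0 < z" "z < 1" and "0 < L" and "K \<le> L" and "0 \<le> \<rho>"
  shows "\<bar>((real L - 1 + z) / L) ^ K - exp (\<rho> * (z - 1))\<bar> \<le> 1 / L + \<bar>real K / L - \<rho>\<bar>"
proof -
  define x where "x = (1 - z) / L"
  have x: "0 \<le> x" "x \<le> 1 / L" "x \<le> 1"
    using assms by (auto simp: x_def divide_right_mono field_simps)
  have "\<bar>(1 - x) ^ K - exp (- x) ^ K\<bar> \<le> K * \<bar>(1 - x) - exp (- x)\<bar>"
    using norm_power_diff[of "1 - x" "exp (- x)" K] x by simp
  also have "\<dots> \<le> K * x\<^sup>2"
    using abs_exp_minus_le[OF x(1)] by (intro mult_left_mono) (auto simp: abs_minus_commute)
  also have "\<dots> \<le> L * (1 / L)\<^sup>2"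
    using assms x by (intro mult_mono power_mono) auto
  finally have "\<bar>(1 - x) ^ K - exp (- x) ^ K\<bar> \<le> 1 / L"
    using assms by (simp add: power2_eq_square)
  moreover have "\<bar>exp (- x) ^ K - exp (\<rho> * (z - 1))\<bar> \<le> \<bar>real K / L - \<rho>\<bar>"
  proof -
    define a where "a = real K / L"
    have "exp (- x) ^ K = exp ((1 - z) * - a)"
      by (simp add: x_def a_def field_simps flip: exp_of_nat_mult)
    moreover have "exp (\<rho> * (z - 1)) = exp ((1 - z) * - \<rho>)"
      by (simp add: algebra_simps)
    moreover have "\<bar>exp ((1 - z) * - a) - exp ((1 - z) * - \<rho>)\<bar> \<le> \<bar>(1 - z) * - a - (1 - z) * - \<rho>\<bar>"
      using assms by (intro abs_exp_diff_le) (auto simp: a_def)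
    moreover have "\<bar>(1 - z) * - a - (1 - z) * - \<rho>\<bar> = (1 - z) * \<bar>a - \<rho>\<bar>"
      using assms by (simp add: abs_mult abs_minus_commute flip: right_diff_distrib)
    moreover have "(1 - z) * \<bar>a - \<rho>\<bar> \<le> \<bar>a - \<rho>\<bar>"
      using assms by (simp add: mult_left_le_one_le)
    ultimately show ?thesis
      by (simp add: a_def)
  qed
  moreover have "(real L - 1 + z) / L = 1 - x"
    using assms by (simp add: x_def field_simps)
  ultimately show ?thesis
    using dist_triangle[of "(1 - x) ^ K" "exp (\<rho> * (z - 1))" "exp (- x) ^ K"]
    by (simp add: dist_real_def)
qed

lemma abs_expectation_thinning_exp_le:
  fixes z \<rho> :: real
  assumes "0 < L" and st: "rbb_stationary L N \<nu>" and z: "0 < z" "z < 1" and "0 \<le> \<rho>"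
  shows "\<bar>measure_pmf.expectation \<nu> (\<lambda>\<eta>. z ^ (\<eta> ! 0 - 1) * ((real L - 1 + z) / L) ^ num_occupied \<eta>)
          - measure_pmf.expectation \<nu> (\<lambda>\<eta>. z ^ (\<eta> ! 0 - 1)) * exp (\<rho> * (z - 1))\<bar>
         \<le> 1 / L + measure_pmf.expectation \<nu> (\<lambda>\<eta>. \<bar>real (num_occupied \<eta>) / L - \<rho>\<bar>)"
proof -
  define E where "E = exp (\<rho> * (z - 1))"
  define T where "T \<eta> = ((real L - 1 + z) / L) ^ num_occupied \<eta>" for \<eta>
  have bound: "\<bar>z ^ (\<eta> ! 0 - 1) * (T \<eta> - E)\<bar> \<le> 1 / L + \<bar>real (num_occupied \<eta>) / L - \<rho>\<bar>"
    if "\<eta> \<in> set_pmf \<nu>" for \<eta>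
  proof -
    have "num_occupied \<eta> \<le> L"
      using that st num_occupied_le_length[of \<eta>] by (auto simp: rbb_stationary_def rbb_configs_def)
    then have "\<bar>T \<eta> - E\<bar> \<le> 1 / L + \<bar>real (num_occupied \<eta>) / L - \<rho>\<bar>"
      unfolding T_def E_def using assms by (intro abs_thinning_power_exp_le) auto
    moreover have "z ^ (\<eta> ! 0 - 1) * \<bar>T \<eta> - E\<bar> \<le> \<bar>T \<eta> - E\<bar>"
      using z by (intro mult_left_le_one_le) (auto intro: power_le_one)
    ultimately show ?thesis
      using z by (simp add: abs_mult)
  qed
  have "\<bar>measure_pmf.expectation \<nu> (\<lambda>\<eta>. z ^ (\<eta> ! 0 - 1) * T \<eta>)
        - measure_pmf.expectation \<nu> (\<lambda>\<eta>. z ^ (\<eta> ! 0 - 1)) * E\<bar>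
      = \<bar>measure_pmf.expectation \<nu> (\<lambda>\<eta>. z ^ (\<eta> ! 0 - 1) * (T \<eta> - E))\<bar>"
    by (simp add: integrable_rbb_stationary[OF st] right_diff_distrib)
  also have "\<dots> \<le> measure_pmf.expectation \<nu> (\<lambda>\<eta>. \<bar>z ^ (\<eta> ! 0 - 1) * (T \<eta> - E)\<bar>)"
    using integral_norm_bound[of "measure_pmf \<nu>"] by simp
  also have "\<dots> \<le> measure_pmf.expectation \<nu> (\<lambda>\<eta>. 1 / L + \<bar>real (num_occupied \<eta>) / L - \<rho>\<bar>)"
    using bound by (intro integral_mono_AE) (auto simp: integrable_rbb_stationary[OF st] AE_measure_pmf_iff)
  also have "\<dots> = 1 / L + measure_pmf.expectation \<nu> (\<lambda>\<eta>. \<bar>real (num_occupied \<eta>) / L - \<rho>\<bar>)"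
    by (simp add: integrable_rbb_stationary[OF st])
  finally show ?thesis
    by (simp add: T_def E_def)
qed

lemma abs_le_add_square_div:
  fixes t c :: real
  assumes "0 < c"
  shows "\<bar>t\<bar> \<le> c + t\<^sup>2 / c"
proof -
  have "2 * c * \<bar>t\<bar> \<le> t\<^sup>2 + c\<^sup>2"
    using zero_le_power2[of "\<bar>t\<bar> - c"] by (simp add: power2_eq_square algebra_simps)
  hence "\<bar>t\<bar> \<le> (t\<^sup>2 + c\<^sup>2) / (2 * c)"
    using assms by (simp add: field_simps)
  also have "\<dots> \<le> c + t\<^sup>2 / c"
    using assms by (simp add: field_simps power2_eq_square)
  finally show ?thesis .
qed

lemma tendsto_expectation_abs_of_sq:
  fixes X :: "'b \<Rightarrow> 'a \<Rightarrow> real"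
  assumes fin: "\<forall>\<^sub>F L in F. finite (set_pmf (P L))"
    and sq: "((\<lambda>L. measure_pmf.expectation (P L) (\<lambda>x. (X L x)\<^sup>2)) \<longlongrightarrow> 0) F"
  shows "((\<lambda>L. measure_pmf.expectation (P L) (\<lambda>x. \<bar>X L x\<bar>)) \<longlongrightarrow> 0) F"
proof (rule tendstoI)
  fix e :: real assume "0 < e"
  have "\<forall>\<^sub>F L in F. measure_pmf.expectation (P L) (\<lambda>x. (X L x)\<^sup>2) < (e / 2) * (e / 2)"
    using sq \<open>0 < e\<close> by (intro order_tendstoD(2)) auto
  with fin show "\<forall>\<^sub>F L in F. dist (measure_pmf.expectation (P L) (\<lambda>x. \<bar>X L x\<bar>)) 0 < e"
  proof eventually_elim
    case (elim L)
    have "\<bar>t\<bar> \<le> e / 2 + t\<^sup>2 / (e / 2)" for t :: real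
      using \<open>0 < e\<close> by (intro abs_le_add_square_div) simp
    hence "measure_pmf.expectation (P L) (\<lambda>x. \<bar>X L x\<bar>) \<le>
           measure_pmf.expectation (P L) (\<lambda>x. e / 2 + (X L x)\<^sup>2 / (e / 2))"
      using elim by (intro integral_mono) (auto intro: integrable_measure_pmf_finite)
    also have "\<dots> = e / 2 + measure_pmf.expectation (P L) (\<lambda>x. (X L x)\<^sup>2) / (e / 2)"
      using elim by (simp add: integrable_measure_pmf_finite)
    also have "\<dots> < e / 2 + e / 2"
      using elim \<open>0 < e\<close> by (simp add: field_simps)
    finally show ?case
      by simp
  qed
qed

section \<open>Chaotic families of stationary distributions\<close>

lemma pmf_map_take_1:
  assumes "\<And>\<eta>. \<eta> \<in> set_pmf p \<Longrightarrow> \<eta> \<noteq> []"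
  shows "pmf (map_pmf (take 1) p) [a] = pmf (map_pmf (\<lambda>\<eta>. \<eta> ! 0) p) a"
proof -
  have "map_pmf (take 1) p = map_pmf (\<lambda>x. [x]) (map_pmf (\<lambda>\<eta>. \<eta> ! 0) p)"
    unfolding pmf.map_comp
    by (intro map_pmf_cong refl) (use assms in \<open>force simp: take_Suc_conv_app_nth\<close>)
  then show ?thesis
    using pmf_map_inj'[of "\<lambda>x. [x]" "map_pmf (\<lambda>\<eta>. \<eta> ! 0) p" a] by (simp add: inj_def)
qed

lemma expectation_of_bool:
  "measure_pmf.expectation p (\<lambda>x. of_bool (P x)) = measure_pmf.prob p {x. P x}"
proof -
  have "(\<lambda>x. of_bool (P x) :: real) = indicator {x. P x}"
    by (auto simp: indicator_def)
  then show ?thesis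
    by simp
qed

lemma pmf_map_take_2:
  assumes "\<And>\<eta>. \<eta> \<in> set_pmf p \<Longrightarrow> 2 \<le> length \<eta>"
  shows "pmf (map_pmf (take 2) p) [a, b] = measure_pmf.prob p {\<eta>. \<eta> ! 0 = a \<and> \<eta> ! 1 = b}"
proof -
  have "take 2 \<eta> = [a, b] \<longleftrightarrow> \<eta> ! 0 = a \<and> \<eta> ! 1 = b" if "2 \<le> length \<eta>" for \<eta>
    using that by (cases \<eta>; cases "tl \<eta>") (auto simp: numeral_2_eq_2)
  then show ?thesis
    using assms by (auto simp: pmf_map intro!: measure_pmf.finite_measure_eq_AE simp: AE_measure_pmf_iff)
qed

lemma pmf_replicate_pmf_Cons:
  "pmf (replicate_pmf (Suc n) p) (x # xs) = pmf p x * pmf (replicate_pmf n p) xs"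
proof -
  have "replicate_pmf (Suc n) p = map_pmf (\<lambda>(x, xs). x # xs) (pair_pmf p (replicate_pmf n p))"
    by (simp add: pair_pmf_def map_bind_pmf)
  moreover have "inj (\<lambda>(x :: 'a, xs). x # xs)"
    by (auto simp: inj_def)
  ultimately show ?thesis
    using pmf_map_inj'[of "\<lambda>(x, xs). x # xs" "pair_pmf p (replicate_pmf n p)" "(x, xs)"]
    by (simp add: pmf_pair)
qed

locale chaotic_rbb_family =
  fixes F :: "nat filter" and r :: real and N :: "nat \<Rightarrow> nat"
    and \<nu> :: "nat \<Rightarrow> nat list pmf" and \<mu> :: "nat pmf"
  assumes nontrivial: "F \<noteq> bot" and le_at_top: "F \<le> at_top" and r_nonneg: "0 \<le> r"
    and stationary: "\<forall>\<^sub>F L in F. rbb_stationary L (N L) (\<nu> L) \<and> real (N L) = r * real L"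
    and chaotic: "\<And>n xs. length xs = n \<Longrightarrow>
        ((\<lambda>L. pmf (map_pmf (take n) (\<nu> L)) xs) \<longlongrightarrow> pmf (replicate_pmf n \<mu>) xs) F"
begin

definition density :: real where
  "density = 1 - pmf \<mu> 0"

definition occupied_first :: "nat \<Rightarrow> real" where
  "occupied_first L = measure_pmf.expectation (\<nu> L) (\<lambda>\<eta>. of_bool (0 < \<eta> ! 0))"

definition occupied_pair :: "nat \<Rightarrow> real" where
  "occupied_pair L = measure_pmf.expectation (\<nu> L) (\<lambda>\<eta>. of_bool (0 < \<eta> ! 0) * of_bool (0 < \<eta> ! 1))"

lemma eventually_stationary:
  "\<forall>\<^sub>F L in F. 2 \<le> L \<and> rbb_stationary L (N L) (\<nu> L) \<and> real (N L) = r * real L"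
  using stationary filter_leD[OF le_at_top eventually_ge_at_top[of 2]] by eventually_elim simp

lemma eventually_length:
  "\<forall>\<^sub>F L in F. 2 \<le> L \<and> (\<forall>\<eta>\<in>set_pmf (\<nu> L). length \<eta> = L)"
  using eventually_stationary by eventually_elim (auto simp: rbb_stationary_def rbb_configs_def)

lemma tendsto_inverse: "((\<lambda>L. 1 / real L) \<longlongrightarrow> 0) F"
  using tendsto_mono[OF le_at_top lim_inverse_n'] .

lemma tendsto_expectation_first:
  fixes f :: "nat \<Rightarrow> real"
  assumes "\<And>n. \<bar>f n\<bar> \<le> B"
  shows "((\<lambda>L. measure_pmf.expectation (\<nu> L) (\<lambda>\<eta>. f (\<eta> ! 0))) \<longlongrightarrow> measure_pmf.expectation \<mu> f) F"
proof -
  have "((\<lambda>L. pmf (map_pmf (\<lambda>\<eta>. \<eta> ! 0) (\<nu> L)) n) \<longlongrightarrow> pmf \<mu> n) F" for n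
  proof -
    have "\<forall>\<^sub>F L in F. pmf (map_pmf (take 1) (\<nu> L)) [n] = pmf (map_pmf (\<lambda>\<eta>. \<eta> ! 0) (\<nu> L)) n"
      using eventually_length by eventually_elim (intro pmf_map_take_1, fastforce)
    moreover have "pmf (replicate_pmf 1 \<mu>) [n] = pmf \<mu> n"
      using pmf_replicate_pmf_Cons[of 0 \<mu> n "[]"] by simp
    ultimately show ?thesis
      using chaotic[of "[n]" 1] tendsto_cong by fastforce
  qed
  then have "((\<lambda>L. measure_pmf.expectation (map_pmf (\<lambda>\<eta>. \<eta> ! 0) (\<nu> L)) f) \<longlongrightarrow>
      measure_pmf.expectation \<mu> f) F"
    by (rule tendsto_expectation_of_tendsto_pmf[where f = f]) (rule assms)
  then show ?thesis
    by simp
qed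

lemma tendsto_empty_pair:
  "((\<lambda>L. measure_pmf.prob (\<nu> L) {\<eta>. \<eta> ! 0 = 0 \<and> \<eta> ! 1 = 0}) \<longlongrightarrow> (pmf \<mu> 0)\<^sup>2) F"
proof -
  have "\<forall>\<^sub>F L in F. pmf (map_pmf (take 2) (\<nu> L)) [0, 0] =
      measure_pmf.prob (\<nu> L) {\<eta>. \<eta> ! 0 = 0 \<and> \<eta> ! 1 = 0}"
    using eventually_length by eventually_elim (intro pmf_map_take_2, auto)
  moreover have "pmf (replicate_pmf 2 \<mu>) [0, 0] = (pmf \<mu> 0)\<^sup>2"
    using pmf_replicate_pmf_Cons[of 1 \<mu> 0 "[0]"] pmf_replicate_pmf_Cons[of 0 \<mu> 0 "[]"]
    by (simp add: numeral_2_eq_2 power2_eq_square)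
  ultimately show ?thesis
    using chaotic[of "[0, 0]" 2] tendsto_cong by fastforce
qed


lemma density_bounds: "0 \<le> density" "density \<le> 1"
  by (auto simp: density_def pmf_le_1)

lemma tendsto_occupied_first: "(occupied_first \<longlongrightarrow> density) F"
proof -
  have "{n :: nat. 0 < n} = - {0}"
    by auto
  hence "measure_pmf.expectation \<mu> (\<lambda>n. of_bool (0 < n)) = density"
    using measure_pmf.prob_compl[of "{0}" \<mu>]
    by (simp add: expectation_of_bool density_def measure_pmf_single Compl_eq_Diff_UNIV)
  then show ?thesis
    unfolding occupied_first_def using tendsto_expectation_first[of "\<lambda>n. of_bool (0 < n)" 1] by simp
qed

lemma tendsto_occupied_pair: "(occupied_pair \<longlongrightarrow> density\<^sup>2) F"
proof -
  define z where "z L = measure_pmf.expectation (\<nu> L) (\<lambda>\<eta>. of_bool (\<eta> ! 0 = 0) :: real)" for L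
  have product: "of_bool (0 < x) * of_bool (0 < y) =
      1 - of_bool (x = 0) - of_bool (y = 0) + (of_bool (x = 0 \<and> y = 0) :: real)" for x y :: nat
    by auto
  have "\<forall>\<^sub>F L in F. occupied_pair L = 1 - 2 * z L + measure_pmf.prob (\<nu> L) {\<eta>. \<eta> ! 0 = 0 \<and> \<eta> ! 1 = 0}"
    using eventually_stationary
  proof eventually_elim
    case (elim L)
    then have st: "rbb_stationary L (N L) (\<nu> L)"
      by simp
    from elim have "measure_pmf.expectation (\<nu> L) (\<lambda>\<eta>. of_bool (\<eta> ! 1 = 0)) = z L"
      using expectation_rbb_stationary_nth[where L = L and i = 1 and f = "\<lambda>x. of_bool (x = 0)"]
      unfolding z_def by auto
    then show ?case
      by (simp add: occupied_pair_def z_def product integrable_rbb_stationary[OF st] expectation_of_bool)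
  qed
  moreover have "(z \<longlongrightarrow> pmf \<mu> 0) F"
    using tendsto_expectation_first[of "\<lambda>n. of_bool (n = 0)" 1] unfolding z_def[abs_def]
    by (simp add: expectation_of_bool measure_pmf_single)
  hence "((\<lambda>L. 1 - 2 * z L + measure_pmf.prob (\<nu> L) {\<eta>. \<eta> ! 0 = 0 \<and> \<eta> ! 1 = 0}) \<longlongrightarrow>
      1 - 2 * pmf \<mu> 0 + (pmf \<mu> 0)\<^sup>2) F"
    by (intro tendsto_intros tendsto_empty_pair)
  moreover have "1 - 2 * pmf \<mu> 0 + (pmf \<mu> 0)\<^sup>2 = density\<^sup>2"
    by (simp add: density_def power2_eq_square algebra_simps)
  ultimately show ?thesis
    using tendsto_cong by fastforce
qed

text \<open>Divided by \<open>L\<close>, the balance identity becomes in the limit the quadratic equation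
  \<open>\<rho>\<^sup>2 - 2(1 + r)\<rho> + 2r = 0\<close> for the density.\<close>
lemma density_eq: "density = 1 + r - sqrt (1 + r\<^sup>2)"
proof -
  define M where "M L = 2 * occupied_first L + 2 * r * occupied_first L - 2 * occupied_first L * (1 / L)
    - (1 - 1 / L) * occupied_pair L" for L
  have "\<forall>\<^sub>F L in F. M L = 2 * r"
    using eventually_stationary
  proof eventually_elim
    case (elim L)
    then have "0 < L" and st: "rbb_stationary L (N L) (\<nu> L)"
      by auto
    have "real L * M L = 2 * real L * occupied_first L + 2 * (r * real L) * occupied_first L
        - 2 * occupied_first L - (real L - 1) * occupied_pair L"
      using \<open>0 < L\<close> by (simp add: M_def field_simps)
    also have "\<dots> = real L * (2 * r)"
      using rbb_stationary_balance[OF \<open>0 < L\<close> st] elim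
      by (simp add: occupied_first_def occupied_pair_def)
    finally show ?case
      using \<open>0 < L\<close> by simp
  qed
  hence "(M \<longlongrightarrow> 2 * r) F"
    by (rule tendsto_eventually)
  moreover have "(M \<longlongrightarrow> 2 * density + 2 * r * density - 2 * density * 0 - (1 - 0) * density\<^sup>2) F"
    unfolding M_def by (intro tendsto_intros tendsto_occupied_first tendsto_occupied_pair tendsto_inverse)
  ultimately have "2 * r = 2 * density + 2 * r * density - density\<^sup>2"
    by (simp add: tendsto_unique[OF nontrivial])
  hence "(1 + r - density)\<^sup>2 = 1 + r\<^sup>2"
    by (simp add: power2_eq_square algebra_simps)
  hence "sqrt (1 + r\<^sup>2) = 1 + r - density"
    using density_bounds r_nonneg by (intro real_sqrt_unique) auto
  then show ?thesis
    by simp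
qed

lemma density_less_1: "density < 1"
  using real_sqrt_less_mono[of "r\<^sup>2" "1 + r\<^sup>2"] r_nonneg by (simp add: density_eq)

text \<open>By exchangeability the second moment of \<open>K/L\<close> is \<open>p/L + (1 - 1/L) q\<close>, which chaos sends to
  \<open>\<rho>\<^sup>2\<close>, so the variance vanishes.\<close>
lemma tendsto_occupied_fraction:
  "((\<lambda>L. measure_pmf.expectation (\<nu> L) (\<lambda>\<eta>. \<bar>real (num_occupied \<eta>) / L - density\<bar>)) \<longlongrightarrow> 0) F"
proof (rule tendsto_expectation_abs_of_sq)
  show "\<forall>\<^sub>F L in F. finite (set_pmf (\<nu> L))"
    using eventually_stationary by eventually_elim (auto intro: finite_set_pmf_rbb_stationary)
  define V where "V L = occupied_first L * (1 / L) + (1 - 1 / L) * occupied_pair L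
    - 2 * density * occupied_first L + density\<^sup>2" for L
  have variance: "\<forall>\<^sub>F L in F.
      measure_pmf.expectation (\<nu> L) (\<lambda>\<eta>. (real (num_occupied \<eta>) / L - density)\<^sup>2) = V L"
    using eventually_stationary
  proof eventually_elim
    case (elim L)
    then have st: "rbb_stationary L (N L) (\<nu> L)" and "0 < L"
      by auto
    have "measure_pmf.expectation (\<nu> L) (\<lambda>\<eta>. (real (num_occupied \<eta>) / L - density)\<^sup>2) =
      measure_pmf.expectation (\<nu> L) (\<lambda>\<eta>. (real (num_occupied \<eta>))\<^sup>2) / L\<^sup>2
      - 2 * density * measure_pmf.expectation (\<nu> L) (\<lambda>\<eta>. real (num_occupied \<eta>)) / L + density\<^sup>2"
      by (simp add: power2_diff power_divide integrable_rbb_stationary[OF st] diff_divide_distrib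
          algebra_simps)
    then show ?case
      using \<open>0 < L\<close> unfolding expectation_num_occupied[OF \<open>0 < L\<close> st]
        expectation_num_occupied_sq[OF \<open>0 < L\<close> st]
      by (simp add: V_def occupied_first_def occupied_pair_def field_simps power2_eq_square)
  qed
  have "(V \<longlongrightarrow> density * 0 + (1 - 0) * density\<^sup>2 - 2 * density * density + density\<^sup>2) F"
    unfolding V_def by (intro tendsto_intros tendsto_occupied_first tendsto_occupied_pair tendsto_inverse)
  then show "((\<lambda>L. measure_pmf.expectation (\<nu> L) (\<lambda>\<eta>. (real (num_occupied \<eta>) / L - density)\<^sup>2))
      \<longlongrightarrow> 0) F"
    using tendsto_cong[OF variance] by (simp add: power2_eq_square)
qed


lemma pgf_limit:
  assumes z: "0 < z" "z < 1"
  shows "pgf \<mu> z = measure_pmf.expectation \<mu> (\<lambda>n. z ^ (n - 1)) * exp (density * (z - 1))"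
proof -
  define E where "E = exp (density * (z - 1))"
  define G where "G L = measure_pmf.expectation (\<nu> L) (\<lambda>\<eta>. z ^ (\<eta> ! 0))" for L
  define H where "H L = measure_pmf.expectation (\<nu> L) (\<lambda>\<eta>. z ^ (\<eta> ! 0 - 1))" for L
  define R where "R L = measure_pmf.expectation (\<nu> L)
    (\<lambda>\<eta>. z ^ (\<eta> ! 0 - 1) * ((real L - 1 + z) / L) ^ num_occupied \<eta>)" for L
  define A where "A L = measure_pmf.expectation (\<nu> L) (\<lambda>\<eta>. \<bar>real (num_occupied \<eta>) / L - density\<bar>)" for L
  have power_bounds: "0 \<le> z ^ n" "z ^ n \<le> 1" for n
    using z by (auto intro: power_le_one)
  have G_eq_R: "\<forall>\<^sub>F L in F. G L = R L"
    using eventually_stationary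
  proof eventually_elim
    case (elim L)
    then show ?case
      unfolding G_def R_def by (intro rbb_stationary_pgf_first[where N = "N L"]) auto
  qed
  have R_close: "\<forall>\<^sub>F L in F. \<bar>R L - H L * E\<bar> \<le> 1 / L + A L"
    using eventually_stationary
  proof eventually_elim
    case (elim L)
    then show ?case
      unfolding R_def H_def A_def E_def using z density_bounds
      by (intro abs_expectation_thinning_exp_le[where N = "N L"]) auto
  qed
  have "((\<lambda>L. 1 / real L + A L) \<longlongrightarrow> 0) F"
    using tendsto_add[OF tendsto_inverse tendsto_occupied_fraction] by (simp add: A_def)
  hence "((\<lambda>L. R L - H L * E) \<longlongrightarrow> 0) F"
    using Lim_null_comparison[of "\<lambda>L. R L - H L * E" "\<lambda>L. 1 / real L + A L" F] R_close by simp
  moreover have "(H \<longlongrightarrow> measure_pmf.expectation \<mu> (\<lambda>n. z ^ (n - 1))) F"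
    unfolding H_def using power_bounds by (intro tendsto_expectation_first[where B = 1]) simp
  ultimately have "((\<lambda>L. (R L - H L * E) + H L * E) \<longlongrightarrow> 0 + measure_pmf.expectation \<mu> (\<lambda>n. z ^ (n - 1)) * E) F"
    by (intro tendsto_intros)
  hence "(G \<longlongrightarrow> measure_pmf.expectation \<mu> (\<lambda>n. z ^ (n - 1)) * E) F"
    using tendsto_cong[OF G_eq_R] by simp
  moreover have "(G \<longlongrightarrow> pgf \<mu> z) F"
    unfolding G_def pgf_def using power_bounds by (intro tendsto_expectation_first[where B = 1]) simp
  ultimately show ?thesis
    using tendsto_unique[OF nontrivial] by (simp add: E_def)
qed

lemma md1_invariant_density: "md1_invariant density \<mu>"
  unfolding md1_invariant_def
proof (rule pmf_eqI_pgf)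
  fix z :: real assume "0 < z" "z < 1"
  then show "pgf (bind_pmf \<mu> (md1_step density)) z = pgf \<mu> z"
    using pgf_bind_md1_step[of density z \<mu>] pgf_limit density_bounds by simp
qed

theorem eq_md1_pi: "\<mu> = md1_pi (1 + r - sqrt (1 + r\<^sup>2))"
proof -
  have "md1_pi density = \<mu>"
    unfolding md1_pi_def
    using md1_invariant_density md1_invariant_unique[OF _ md1_invariant_density]
      density_bounds(1) density_less_1 by blast
  then show ?thesis
    by (simp add: density_eq)
qed

end

lemma at_top_inf_principal_ne_bot:
  fixes A :: "nat set"
  assumes "infinite A"
  shows "at_top \<sqinter> principal A \<noteq> bot"
  unfolding trivial_limit_def eventually_inf_principal
  using assms frequently_cofinite[of "\<lambda>x. x \<in> A"] by (simp add: cofinite_eq_sequentially frequently_def)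

theorem mainTheorem7:
  fixes r :: real and \<nu> :: "nat \<Rightarrow> nat list pmf" and \<mu> :: "nat pmf"
  defines "Ls \<equiv> {L::nat. 0 < L \<and> (\<exists>N::nat. real N = r * real L)}"
  assumes r_pos: "0 < r"
    and Ls_inf: "infinite Ls"
    and stat: "\<And>L N. L \<in> Ls \<Longrightarrow> real N = r * real L \<Longrightarrow> rbb_stationary L N (\<nu> L)"
    and chaotic: "\<And>n xs. length xs = n \<Longrightarrow>
        ((\<lambda>L. pmf (map_pmf (take n) (\<nu> L)) xs) \<longlongrightarrow> pmf (replicate_pmf n \<mu>) xs)
          (at_top \<sqinter> principal Ls)"
  shows "\<mu> = md1_pi (1 + r - sqrt (1 + r\<^sup>2))"
proof -
  define N where "N L = (SOME n :: nat. real n = r * real L)" for L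
  have N: "real (N L) = r * real L" if "L \<in> Ls" for L
    using that someI_ex[of "\<lambda>n :: nat. real n = r * real L"] by (auto simp: Ls_def N_def)
  interpret chaotic_rbb_family "at_top \<sqinter> principal Ls" r N \<nu> \<mu>
  proof
    show "at_top \<sqinter> principal Ls \<noteq> bot"
      using Ls_inf by (rule at_top_inf_principal_ne_bot)
    show "\<forall>\<^sub>F L in at_top \<sqinter> principal Ls. rbb_stationary L (N L) (\<nu> L) \<and> real (N L) = r * real L"
      using stat N by (auto simp: eventually_inf_principal intro!: always_eventually)
  qed (use r_pos chaotic in auto)
  show ?thesis
    by (rule eq_md1_pi)
qed

end
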